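(* Let $T$ be the modular tree of a finite graph $X$, let $N$ be the root node of $T$, and let $T_1,\dots,T_k$ be the subtrees of the children of $N$ (attached to the marker vertices of $N$). Color the marker vertices of $N$ so that two of them get the same color iff their attached subtrees are isomorphic. Then $${\rm Aut}(T)\cong\bigl({\rm Aut}(T_1)\times\cdots\times{\rm Aut}(T_k)\bigr)\rtimes{\rm Aut}(N),$$ where ${\rm Aut}(N)$ denotes the group of color-preserving automorphisms of $N$ (acting by permuting the factors corresponding to isomorphic subtrees).
   Context: A module of a graph $X$ is a set $M\subseteq V(X)$ such that every $x\in V(X)\setminus M$ is adjacent either to all vertices of $M$ or to none. A module is trivial if it equals $V(X)$ or has size $1$; a graph is prime if all its modules are trivial, and degenerate if it is $K_n$ or $\overline{K_n}$. Two disjoint modules are adjacent if all edges between them are present. For a modular partition $\mathcal P=\{M_1,\dots,M_k\}$ of $V(X)$, the quotient $X/\mathcal P$ has vertices $m_1,\dots,m_k$ with $m_im_j$ an edge iff $M_i,M_j$ are adjacent. Modular decomposition: if $X$ is prime or degenerate, stop; if $X$ and $\overline X$ are connected, use the partition into inclusion-maximal proper modules; if $X$ is disconnected (and $\overline X$ connected), use the connected components of $X$; if $\overline X$ is disconnected (and $X$ connected), use the connected components of $\overline X$; recurse on each part. The modular tree $T$ (with normal and marker vertices, normal edges and directed tree edges, and a root node) is defined recursively: if $X$ is prime or degenerate, $T=X$ is its own root node. Otherwise, with $\mathcal P=\{M_1,\dots,M_k\}$ the partition used and $T_i$ the modular tree of $X[M_i]$, $T$ is the disjoint union of the $T_i$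 and of the quotient $X/\mathcal P$ (the root node, with marker vertices $m_1,\dots,m_k$); to each $T_i$ a new marker vertex $m_i'$ adjacent exactly to the root node of $T_i$ is added, together with a tree edge oriented from $m_i$ to $m_i'$. The subtree $T_i$ is the modular tree whose root node is the node of $X[M_i]$. Automorphisms of modular trees must preserve vertex types, edge types and orientations of tree edges. *)

theory Defs
  imports "HOL-Algebra.Group" "HOL-Library.FuncSet"
begin

text \<open>A graph X is given by a vertex set V and an adjacency relation E
  (only its values on V matter).\<close>

definition fin_graph :: "'a set \<Rightarrow> ('a \<Rightarrow> 'a \<Rightarrow> bool) \<Rightarrow> bool" where
  "fin_graph V E \<longleftrightarrow> finite V \<and> (\<forall>x\<in>V. \<forall>y\<in>V. E x y \<longleftrightarrow> E y x) \<and> (\<forall>x\<in>V. \<not> E x x)"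

definition is_module :: "('a \<Rightarrow> 'a \<Rightarrow> bool) \<Rightarrow> 'a set \<Rightarrow> 'a set \<Rightarrow> bool" where
  "is_module E S M \<longleftrightarrow> M \<subseteq> S \<and> M \<noteq> {} \<and>
     (\<forall>x\<in>S - M. (\<forall>y\<in>M. E x y) \<or> (\<forall>y\<in>M. \<not> E x y))"

definition is_prime :: "('a \<Rightarrow> 'a \<Rightarrow> bool) \<Rightarrow> 'a set \<Rightarrow> bool" where
  "is_prime E S \<longleftrightarrow> (\<forall>M. is_module E S M \<longrightarrow> M = S \<or> card M = 1)"

definition is_degenerate :: "('a \<Rightarrow> 'a \<Rightarrow> bool) \<Rightarrow> 'a set \<Rightarrow> bool" where
  "is_degenerate E S \<longleftrightarrow> (\<forall>x\<in>S. \<forall>y\<in>S. x \<noteq> y \<longrightarrow> E x y) \<or> (\<forall>x\<in>S. \<forall>y\<in>S. \<not> E x y)"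

definition is_leaf :: "('a \<Rightarrow> 'a \<Rightarrow> bool) \<Rightarrow> 'a set \<Rightarrow> bool" where
  "is_leaf E S \<longleftrightarrow> is_prime E S \<or> is_degenerate E S"

definition co_adj :: "('a \<Rightarrow> 'a \<Rightarrow> bool) \<Rightarrow> 'a \<Rightarrow> 'a \<Rightarrow> bool" where
  "co_adj E x y \<longleftrightarrow> x \<noteq> y \<and> \<not> E x y"

definition restr_rel :: "('a \<Rightarrow> 'a \<Rightarrow> bool) \<Rightarrow> 'a set \<Rightarrow> 'a \<Rightarrow> 'a \<Rightarrow> bool" where
  "restr_rel R S x y \<longleftrightarrow> x \<in> S \<and> y \<in> S \<and> R x y"

definition is_connected :: "('a \<Rightarrow> 'a \<Rightarrow> bool) \<Rightarrow> 'a set \<Rightarrow> bool" where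
  "is_connected R S \<longleftrightarrow> (\<forall>x\<in>S. \<forall>y\<in>S. (restr_rel R S)\<^sup>*\<^sup>* x y)"

definition components :: "('a \<Rightarrow> 'a \<Rightarrow> bool) \<Rightarrow> 'a set \<Rightarrow> 'a set set" where
  "components R S = {{y \<in> S. (restr_rel R S)\<^sup>*\<^sup>* x y} | x. x \<in> S}"

definition max_proper_modules :: "('a \<Rightarrow> 'a \<Rightarrow> bool) \<Rightarrow> 'a set \<Rightarrow> 'a set set" where
  "max_proper_modules E S = {M. is_module E S M \<and> M \<noteq> S \<and>
     (\<forall>M'. is_module E S M' \<and> M' \<noteq> S \<and> M \<subseteq> M' \<longrightarrow> M' = M)}"

definition mpart :: "('a \<Rightarrow> 'a \<Rightarrow> bool) \<Rightarrow> 'a set \<Rightarrow> 'a set set" where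
  "mpart E S =
     (if is_connected E S \<and> is_connected (co_adj E) S then max_proper_modules E S
      else if \<not> is_connected E S then components E S
      else components (co_adj E) S)"

text \<open>The sets (modules) occurring as nodes of the modular decomposition of X = (V,E).\<close>
inductive_set dsets :: "'a set \<Rightarrow> ('a \<Rightarrow> 'a \<Rightarrow> bool) \<Rightarrow> 'a set set"
  for V :: "'a set" and E :: "'a \<Rightarrow> 'a \<Rightarrow> bool" where
  root: "V \<in> dsets V E"
| child: "S \<in> dsets V E \<Longrightarrow> \<not> is_leaf E S \<Longrightarrow> M \<in> mpart E S \<Longrightarrow> M \<in> dsets V E"

definition mod_adjacent :: "('a \<Rightarrow> 'a \<Rightarrow> bool) \<Rightarrow> 'a set \<Rightarrow> 'a set \<Rightarrow> bool" where
  "mod_adjacent E M M' \<longleftrightarrow> (\<forall>x\<in>M. \<forall>y\<in>M'. E x y)"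

text \<open>A modular tree: vertices, normal vertices (the others are marker vertices),
  normal (undirected, stored symmetrically) edges and directed tree edges.\<close>
record 'v mtree =
  mverts :: "'v set"
  mnormal :: "'v set"
  mnedges :: "('v \<times> 'v) set"
  mtedges :: "('v \<times> 'v) set"

text \<open>Vertex names: normal vertex x is Inl x; the marker m in the parent node
  representing the child module M is Inr (M, False); the added marker m' in the
  node of M is Inr (M, True).\<close>
type_synonym 'a mvert = "'a + ('a set \<times> bool)"

definition node_verts :: "'a set \<Rightarrow> ('a \<Rightarrow> 'a \<Rightarrow> bool) \<Rightarrow> 'a set \<Rightarrow> 'a mvert set" where
  "node_verts V E S =
     (if is_leaf E S then Inl ` S else (\<lambda>M. Inr (M, False)) ` mpart E S)
     \<union> (if S = V then {} else {Inr (S, True)})"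

definition node_edges :: "'a set \<Rightarrow> ('a \<Rightarrow> 'a \<Rightarrow> bool) \<Rightarrow> 'a set \<Rightarrow> ('a mvert \<times> 'a mvert) set" where
  "node_edges V E S =
     (if is_leaf E S then {(Inl x, Inl y) | x y. x \<in> S \<and> y \<in> S \<and> E x y}
      else {(Inr (M, False), Inr (M', False)) | M M'.
              M \<in> mpart E S \<and> M' \<in> mpart E S \<and> M \<noteq> M' \<and> mod_adjacent E M M'})
     \<union> (if S = V then {} else
          {(Inr (S, True), w) | w. w \<in> node_verts V E S - {Inr (S, True)}}
          \<union> {(w, Inr (S, True)) | w. w \<in> node_verts V E S - {Inr (S, True)}})"

definition modtree :: "'a set \<Rightarrow> ('a \<Rightarrow> 'a \<Rightarrow> bool) \<Rightarrow> 'a mvert mtree" where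
  "modtree V E =
     \<lparr> mverts = (\<Union>S\<in>dsets V E. node_verts V E S),
       mnormal = Inl ` V,
       mnedges = (\<Union>S\<in>dsets V E. node_edges V E S),
       mtedges = {(Inr (M, False), Inr (M, True)) | M. M \<in> dsets V E \<and> M \<noteq> V} \<rparr>"

definition root_node :: "'a set \<Rightarrow> ('a \<Rightarrow> 'a \<Rightarrow> bool) \<Rightarrow> 'a mvert set" where
  "root_node V E = node_verts V E V"

definition root_markers :: "'a set \<Rightarrow> ('a \<Rightarrow> 'a \<Rightarrow> bool) \<Rightarrow> 'a mvert set" where
  "root_markers V E = root_node V E - mnormal (modtree V E)"

definition marker_set :: "'a mvert \<Rightarrow> 'a set" where
  "marker_set v = (case v of Inl _ \<Rightarrow> {} | Inr (M, _) \<Rightarrow> M)"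

definition subtree :: "('a \<Rightarrow> 'a \<Rightarrow> bool) \<Rightarrow> 'a mvert \<Rightarrow> 'a mvert mtree" where
  "subtree E v = modtree (marker_set v) E"

definition mt_isom :: "'v mtree \<Rightarrow> 'w mtree \<Rightarrow> ('v \<Rightarrow> 'w) \<Rightarrow> bool" where
  "mt_isom T T' f \<longleftrightarrow> bij_betw f (mverts T) (mverts T') \<and>
     (\<forall>x\<in>mverts T. x \<in> mnormal T \<longleftrightarrow> f x \<in> mnormal T') \<and>
     (\<forall>x\<in>mverts T. \<forall>y\<in>mverts T.
        ((x, y) \<in> mnedges T \<longleftrightarrow> (f x, f y) \<in> mnedges T') \<and>
        ((x, y) \<in> mtedges T \<longleftrightarrow> (f x, f y) \<in> mtedges T'))"

definition mt_isomorphic :: "'v mtree \<Rightarrow> 'w mtree \<Rightarrow> bool" where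
  "mt_isomorphic T T' \<longleftrightarrow> (\<exists>f. mt_isom T T' f)"

definition aut_group :: "'v mtree \<Rightarrow> ('v \<Rightarrow> 'v) monoid" where
  "aut_group T =
     \<lparr> carrier = {f. f \<in> extensional (mverts T) \<and> mt_isom T T f},
       mult = (\<lambda>f g. compose (mverts T) f g),
       one = restrict id (mverts T) \<rparr>"

text \<open>Colour-preserving automorphisms of the root node N: automorphisms of the
  node graph (preserving vertex types) such that each marker vertex is mapped to a
  marker vertex whose attached subtree is isomorphic (same colour).\<close>
definition aut_root_node :: "'a set \<Rightarrow> ('a \<Rightarrow> 'a \<Rightarrow> bool) \<Rightarrow> ('a mvert \<Rightarrow> 'a mvert) set" where
  "aut_root_node V E =
     {p. p \<in> extensional (root_node V E) \<and> bij_betw p (root_node V E) (root_node V E) \<and>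
         (\<forall>x\<in>root_node V E. x \<in> mnormal (modtree V E) \<longleftrightarrow> p x \<in> mnormal (modtree V E)) \<and>
         (\<forall>x\<in>root_node V E. \<forall>y\<in>root_node V E.
            (x, y) \<in> mnedges (modtree V E) \<longleftrightarrow> (p x, p y) \<in> mnedges (modtree V E)) \<and>
         (\<forall>v\<in>root_markers V E. mt_isomorphic (subtree E v) (subtree E (p v)))}"

text \<open>To let Aut(N) act by permuting isomorphic factors, isomorphic subtrees are
  identified coherently: each colour class gets a representative, and every
  subtree is identified with its representative by a fixed isomorphism.\<close>

definition rep_marker :: "'a set \<Rightarrow> ('a \<Rightarrow> 'a \<Rightarrow> bool) \<Rightarrow> 'a mvert \<Rightarrow> 'a mvert" where
  "rep_marker V E v = (SOME w. w \<in> root_markers V E \<and> mt_isomorphic (subtree E v) (subtree E w))"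

definition rep_iso :: "'a set \<Rightarrow> ('a \<Rightarrow> 'a \<Rightarrow> bool) \<Rightarrow> 'a mvert \<Rightarrow> 'a mvert \<Rightarrow> 'a mvert" where
  "rep_iso V E v = (SOME f. f \<in> extensional (mverts (subtree E v)) \<and>
                     mt_isom (subtree E v) (subtree E (rep_marker V E v)) f)"

definition rep_iso_inv :: "'a set \<Rightarrow> ('a \<Rightarrow> 'a \<Rightarrow> bool) \<Rightarrow> 'a mvert \<Rightarrow> 'a mvert \<Rightarrow> 'a mvert" where
  "rep_iso_inv V E v = restrict (inv_into (mverts (subtree E v)) (rep_iso V E v))
                          (mverts (subtree E (rep_marker V E v)))"

definition transport :: "'a set \<Rightarrow> ('a \<Rightarrow> 'a \<Rightarrow> bool) \<Rightarrow> 'a mvert \<Rightarrow> 'a mvert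
      \<Rightarrow> ('a mvert \<Rightarrow> 'a mvert) \<Rightarrow> ('a mvert \<Rightarrow> 'a mvert)" where
  "transport V E u w f = restrict
     (rep_iso_inv V E w \<circ> rep_iso V E u \<circ> f \<circ> rep_iso_inv V E u \<circ> rep_iso V E w)
     (mverts (subtree E w))"

text \<open>Action of p in Aut(N) on a tuple (a_v) of automorphisms of the subtrees:
  the v-th component is moved to position p v.\<close>
definition root_action :: "'a set \<Rightarrow> ('a \<Rightarrow> 'a \<Rightarrow> bool) \<Rightarrow> ('a mvert \<Rightarrow> 'a mvert)
      \<Rightarrow> ('a mvert \<Rightarrow> 'a mvert \<Rightarrow> 'a mvert) \<Rightarrow> ('a mvert \<Rightarrow> 'a mvert \<Rightarrow> 'a mvert)" where
  "root_action V E p a =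
     (\<lambda>w\<in>root_markers V E.
        let u = inv_into (root_node V E) p w in transport V E u w (a u))"

definition semidirect_aut :: "'a set \<Rightarrow> ('a \<Rightarrow> 'a \<Rightarrow> bool)
      \<Rightarrow> (('a mvert \<Rightarrow> 'a mvert \<Rightarrow> 'a mvert) \<times> ('a mvert \<Rightarrow> 'a mvert)) monoid" where
  "semidirect_aut V E =
     \<lparr> carrier = (\<Pi>\<^sub>E v\<in>root_markers V E. carrier (aut_group (subtree E v)))
                  \<times> aut_root_node V E,
       mult = (\<lambda>(a, p) (b, q).
                 ((\<lambda>v\<in>root_markers V E. a v \<otimes>\<^bsub>aut_group (subtree E v)\<^esub> root_action V E p b v),
                  compose (root_node V E) p q)),
       one = ((\<lambda>v\<in>root_markers V E. \<one>\<^bsub>aut_group (subtree E v)\<^esub>),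
              restrict id (root_node V E)) \<rparr>"

end

theory Submission
  imports Defs
begin

text \<open>The vertices of the root node N are intrinsic to T: they are neither heads of tree edges
  nor normal neighbours of such heads. So an automorphism of T restricts to a colour-preserving
  automorphism p of N, and it maps the branch below each marker u (everything reachable from the
  head of the tree edge at u, i.e. the subtree T_u and its parent marker) isomorphically onto the
  branch below p u. Conversely, such a p together with automorphisms of the subtrees glues to an
  automorphism of T. Pulling the branch isomorphisms back along fixed identifications of each
  subtree with a representative of its colour class turns this bijection into a group isomorphism:
  composing automorphisms of T composes the subtree components after permuting them by p, which is
  the multiplication of the semidirect product.\<close>

lemma fin_graph_subset: "fin_graph V E \<Longrightarrow> S \<subseteq> V \<Longrightarrow> fin_graph S E"
  unfolding fin_graph_def by (auto intro: finite_subset)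

lemma fin_graph_symp_on: "fin_graph S E \<Longrightarrow> symp_on S E"
  unfolding fin_graph_def by (auto intro: symp_onI)

lemma fin_graph_symp_on_co_adj: "fin_graph S E \<Longrightarrow> symp_on S (co_adj E)"
  unfolding fin_graph_def co_adj_def by (auto intro: symp_onI)

lemma symp_rtranclp_restr_rel: "symp_on S R \<Longrightarrow> symp (restr_rel R S)\<^sup>*\<^sup>*"
  by (rule symp_rtranclp) (auto simp: restr_rel_def intro!: sympI dest: symp_onD)

lemma components_eq:
  assumes sym: "symp_on S R" and C: "C \<in> components R S" and x: "x \<in> C"
  shows "C = {y \<in> S. (restr_rel R S)\<^sup>*\<^sup>* x y}"
proof -
  obtain c where "C = {y \<in> S. (restr_rel R S)\<^sup>*\<^sup>* c y}"
    using C unfolding components_def by auto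
  with x symp_rtranclp_restr_rel[OF sym] show ?thesis
    by (auto dest: sympD intro: rtranclp_trans)
qed

lemma components_disjoint:
  assumes "symp_on S R" "C1 \<in> components R S" "C2 \<in> components R S" "C1 \<inter> C2 \<noteq> {}"
  shows "C1 = C2"
proof -
  obtain x where x: "x \<in> C1" "x \<in> C2" using assms(4) by blast
  show ?thesis
    using components_eq[OF assms(1) assms(2) x(1)] components_eq[OF assms(1) assms(3) x(2)] by simp
qed

lemma components_proper:
  assumes sym: "symp_on S R" and C: "C \<in> components R S" and "\<not> is_connected R S"
  shows "C \<subseteq> S" "C \<noteq> {}" "C \<noteq> S"
proof -
  obtain x where x: "x \<in> S" "C = {y \<in> S. (restr_rel R S)\<^sup>*\<^sup>* x y}"
    using C unfolding components_def by auto
  show "C \<subseteq> S" "C \<noteq> {}" using x by auto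
  show "C \<noteq> S"
  proof
    assume "C = S"
    have "(restr_rel R S)\<^sup>*\<^sup>* y z" if "y \<in> S" "z \<in> S" for y z
    proof -
      have "(restr_rel R S)\<^sup>*\<^sup>* x y" "(restr_rel R S)\<^sup>*\<^sup>* x z"
        using x that \<open>C = S\<close> by auto
      then show ?thesis
        using sympD[OF symp_rtranclp_restr_rel[OF sym]] by (metis rtranclp_trans)
    qed
    with \<open>\<not> is_connected R S\<close> show False unfolding is_connected_def by blast
  qed
qed

lemma not_connected_if_split:
  assumes "A \<union> B = S" "A \<inter> B = {}" "a \<in> A" "b \<in> B" "\<forall>x\<in>A. \<forall>y\<in>B. \<not> R x y"
  shows "\<not> is_connected R S"
proof
  assume "is_connected R S"
  then have "(restr_rel R S)\<^sup>*\<^sup>* a b"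
    using assms(1,3,4) unfolding is_connected_def by blast
  moreover have "y \<in> A" if "(restr_rel R S)\<^sup>*\<^sup>* a y" for y
    using that by induction (use assms in \<open>auto simp: restr_rel_def\<close>)
  ultimately show False using assms(2,4) by blast
qed

lemma is_module_Un:
  assumes "is_module E S M1" "is_module E S M2" "M1 \<inter> M2 \<noteq> {}"
  shows "is_module E S (M1 \<union> M2)"
  unfolding is_module_def
proof (intro conjI ballI)
  show "M1 \<union> M2 \<subseteq> S" "M1 \<union> M2 \<noteq> {}" using assms unfolding is_module_def by auto
  fix x assume x: "x \<in> S - (M1 \<union> M2)"
  then have "(\<forall>y\<in>M1. E x y) \<or> (\<forall>y\<in>M1. \<not> E x y)" "(\<forall>y\<in>M2. E x y) \<or> (\<forall>y\<in>M2. \<not> E x y)"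
    using assms(1,2) unfolding is_module_def by auto
  then show "(\<forall>y\<in>M1 \<union> M2. E x y) \<or> (\<forall>y\<in>M1 \<union> M2. \<not> E x y)" using assms(3) by blast
qed

text \<open>Every vertex outside M1 lies in M2, so all pairs between S - M1 and M1 have the
  same adjacency status.\<close>
lemma modules_cover_disconnects:
  assumes g: "fin_graph S E" and mod1: "is_module E S M1" and mod2: "is_module E S M2"
    and cover: "M1 \<union> M2 = S" and "\<not> M2 \<subseteq> M1" "\<not> M1 \<subseteq> M2"
  shows "\<not> is_connected E S \<or> \<not> is_connected (co_adj E) S"
proof -
  have sub: "M1 \<subseteq> S" "M2 \<subseteq> S" using mod1 mod2 unfolding is_module_def by auto
  obtain x0 where x0: "x0 \<in> M2" "x0 \<notin> M1" using assms(5) by auto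
  obtain y0 where y0: "y0 \<in> M1" "y0 \<notin> M2" using assms(6) by auto
  have sym: "E x y = E y x" if "x \<in> S" "y \<in> S" for x y
    using g that unfolding fin_graph_def by auto
  have on_M1: "(\<forall>y\<in>M1. E x y) \<or> (\<forall>y\<in>M1. \<not> E x y)" if "x \<in> S - M1" for x
    using mod1 that unfolding is_module_def by auto
  have on_M2: "(\<forall>y\<in>M2. E x y) \<or> (\<forall>y\<in>M2. \<not> E x y)" if "x \<in> S - M2" for x
    using mod2 that unfolding is_module_def by auto
  have uniform: "E x z = E x0 y0" if x: "x \<in> S - M1" and z: "z \<in> M1" for x z
  proof -
    have "x \<in> M2" using x cover by auto
    have "E x z = E x y0" using on_M1[OF x] z y0 by auto
    also have "\<dots> = E y0 x" using sym sub x y0 by auto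
    also have "\<dots> = E y0 x0" using on_M2[of y0] y0 sub \<open>x \<in> M2\<close> x0 by auto
    also have "\<dots> = E x0 y0" using sym sub x0 y0 by auto
    finally show ?thesis .
  qed
  have x0S: "x0 \<in> S - M1" using x0 sub by auto
  show ?thesis
  proof (cases "E x0 y0")
    case True
    have "\<not> is_connected (co_adj E) S"
      by (rule not_connected_if_split[of "S - M1" M1 S x0 y0])
        (use cover sub x0S y0 uniform True in \<open>auto simp: co_adj_def\<close>)
    then show ?thesis ..
  next
    case False
    have "\<not> is_connected E S"
      by (rule not_connected_if_split[of "S - M1" M1 S x0 y0])
        (use cover sub x0S y0 uniform False in auto)
    then show ?thesis ..
  qed
qed

lemma max_proper_modules_disjoint:
  assumes g: "fin_graph S E" and conn: "is_connected E S" "is_connected (co_adj E) S"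
    and M1: "M1 \<in> max_proper_modules E S" and M2: "M2 \<in> max_proper_modules E S"
    and meet: "M1 \<inter> M2 \<noteq> {}"
  shows "M1 = M2"
proof (rule ccontr)
  assume ne: "M1 \<noteq> M2"
  have mod1: "is_module E S M1" "M1 \<noteq> S"
    and max1: "\<And>M. is_module E S M \<Longrightarrow> M \<noteq> S \<Longrightarrow> M1 \<subseteq> M \<Longrightarrow> M = M1"
    using M1 unfolding max_proper_modules_def by auto
  have mod2: "is_module E S M2" "M2 \<noteq> S"
    and max2: "\<And>M. is_module E S M \<Longrightarrow> M \<noteq> S \<Longrightarrow> M2 \<subseteq> M \<Longrightarrow> M = M2"
    using M2 unfolding max_proper_modules_def by auto
  have cover: "M1 \<union> M2 = S"
  proof (rule ccontr)
    assume "M1 \<union> M2 \<noteq> S"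
    then have "M1 \<union> M2 = M1" "M1 \<union> M2 = M2"
      using max1 max2 is_module_Un[OF mod1(1) mod2(1) meet] by auto
    with ne show False by blast
  qed
  moreover have "\<not> M2 \<subseteq> M1" "\<not> M1 \<subseteq> M2" using cover mod1(2) mod2(2) by auto
  ultimately show False using modules_cover_disconnects[OF g mod1(1) mod2(1)] conn by blast
qed

lemma mpart_proper:
  assumes g: "fin_graph S E" and M: "M \<in> mpart E S"
  shows "M \<subseteq> S" "M \<noteq> {}" "M \<noteq> S"
proof -
  consider "M \<in> max_proper_modules E S"
    | "M \<in> components E S" "\<not> is_connected E S"
    | "M \<in> components (co_adj E) S" "\<not> is_connected (co_adj E) S"
    using M unfolding mpart_def by (auto split: if_splits)
  then have "M \<subseteq> S \<and> M \<noteq> {} \<and> M \<noteq> S"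
  proof cases
    case 1 then show ?thesis unfolding max_proper_modules_def is_module_def by blast
  next
    case 2 then show ?thesis using components_proper[OF fin_graph_symp_on[OF g]] by blast
  next
    case 3 then show ?thesis using components_proper[OF fin_graph_symp_on_co_adj[OF g]] by blast
  qed
  then show "M \<subseteq> S" "M \<noteq> {}" "M \<noteq> S" by auto
qed

lemma mpart_disjoint:
  assumes g: "fin_graph S E" and "M1 \<in> mpart E S" "M2 \<in> mpart E S" "M1 \<inter> M2 \<noteq> {}"
  shows "M1 = M2"
proof (cases "is_connected E S \<and> is_connected (co_adj E) S")
  case True
  then show ?thesis using assms max_proper_modules_disjoint[OF g] unfolding mpart_def by auto
next
  case False
  then show ?thesis
    using assms components_disjoint[OF fin_graph_symp_on[OF g]]
      components_disjoint[OF fin_graph_symp_on_co_adj[OF g]]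
    unfolding mpart_def by (simp split: if_splits)
qed

definition child_of :: "('a \<Rightarrow> 'a \<Rightarrow> bool) \<Rightarrow> 'a set \<Rightarrow> 'a set \<Rightarrow> bool" where
  "child_of E S M \<longleftrightarrow> \<not> is_leaf E S \<and> M \<in> mpart E S"

lemma dsets_eq_descendants: "dsets W E = {M. (child_of E)\<^sup>*\<^sup>* W M}"
proof -
  have "(child_of E)\<^sup>*\<^sup>* W M" if "M \<in> dsets W E" for M
    using that by induction (auto simp: child_of_def intro: rtranclp.rtrancl_into_rtrancl)
  moreover have "M \<in> dsets W E" if "(child_of E)\<^sup>*\<^sup>* W M" for M
    using that by induction (auto simp: child_of_def intro: dsets.intros)
  ultimately show ?thesis by blast
qed

lemma node_verts_cases:
  assumes "x \<in> node_verts W E S"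
  obtains z where "x = Inl z" "z \<in> S" "is_leaf E S"
    | K where "x = Inr (K, False)" "child_of E S K"
    | "x = Inr (S, True)" "S \<noteq> W"
  using assms unfolding node_verts_def child_of_def by (auto split: if_splits)

lemma Inl_in_node_verts_iff: "Inl z \<in> node_verts W E S \<longleftrightarrow> z \<in> S \<and> is_leaf E S"
  unfolding node_verts_def by auto

lemma marker_in_node_verts_iff: "Inr (K, False) \<in> node_verts W E S \<longleftrightarrow> child_of E S K"
  unfolding node_verts_def child_of_def by auto

lemma parent_marker_in_node_verts_iff: "Inr (K, True) \<in> node_verts W E S \<longleftrightarrow> K = S \<and> S \<noteq> W"
  unfolding node_verts_def by auto

definition node_inner_edges :: "('a \<Rightarrow> 'a \<Rightarrow> bool) \<Rightarrow> 'a set \<Rightarrow> ('a mvert \<times> 'a mvert) set" where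
  "node_inner_edges E S =
     (if is_leaf E S then {(Inl x, Inl y) | x y. x \<in> S \<and> y \<in> S \<and> E x y}
      else {(Inr (M, False), Inr (M', False)) | M M'.
              M \<in> mpart E S \<and> M' \<in> mpart E S \<and> M \<noteq> M' \<and> mod_adjacent E M M'})"

lemma parent_marker_notin_inner_edges:
  "(Inr (K, True), y) \<notin> node_inner_edges E S" "(y, Inr (K, True)) \<notin> node_inner_edges E S"
  unfolding node_inner_edges_def by auto

lemma node_edges_iff:
  "(x, y) \<in> node_edges W E S \<longleftrightarrow> (x, y) \<in> node_inner_edges E S \<or>
     (S \<noteq> W \<and> ((x = Inr (S, True) \<and> y \<in> node_verts W E S - {Inr (S, True)}) \<or>
                  (y = Inr (S, True) \<and> x \<in> node_verts W E S - {Inr (S, True)})))"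
  unfolding node_edges_def node_inner_edges_def[symmetric] by (cases "S = W") auto

lemma node_edges_parent_marker:
  "(Inr (S, True), y) \<in> node_edges W E S \<longleftrightarrow> S \<noteq> W \<and> y \<in> node_verts W E S - {Inr (S, True)}"
  "(y, Inr (S, True)) \<in> node_edges W E S \<longleftrightarrow> S \<noteq> W \<and> y \<in> node_verts W E S - {Inr (S, True)}"
  unfolding node_edges_iff by (auto simp: parent_marker_notin_inner_edges)

lemma node_edges_in_node_verts:
  assumes "(x, y) \<in> node_edges W E S"
  shows "x \<in> node_verts W E S" "y \<in> node_verts W E S"
  using assms unfolding node_edges_def node_verts_def
  by (auto split: if_splits dest: mpart_proper)

lemma descendant_first_child:
  assumes "(child_of E)\<^sup>*\<^sup>* S M" "M \<noteq> S"
  obtains C where "child_of E S C" "(child_of E)\<^sup>*\<^sup>* C M"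
  using assms by (blast elim: converse_rtranclpE)

context
  fixes W :: "'a set" and E :: "'a \<Rightarrow> 'a \<Rightarrow> bool"
  assumes g: "fin_graph W E"
begin

lemma dsets_subset: "S \<in> dsets W E \<Longrightarrow> S \<subseteq> W"
  by (induction rule: dsets.induct) (use mpart_proper fin_graph_subset[OF g] in blast)+

lemma dsets_fin_graph: "S \<in> dsets W E \<Longrightarrow> fin_graph S E"
  using dsets_subset fin_graph_subset g by blast

lemma child_of_dsets:
  assumes "S \<in> dsets W E" "child_of E S M"
  shows "M \<subseteq> S" "M \<noteq> {}" "M \<noteq> S" "M \<in> dsets W E"
  using assms mpart_proper[OF dsets_fin_graph] unfolding child_of_def by (auto intro: dsets.child)

lemma child_of_disjoint:
  "S \<in> dsets W E \<Longrightarrow> child_of E S M1 \<Longrightarrow> child_of E S M2 \<Longrightarrow> M1 \<inter> M2 \<noteq> {} \<Longrightarrow> M1 = M2"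
  using mpart_disjoint[OF dsets_fin_graph] unfolding child_of_def by blast

lemma descendant_dsets:
  assumes "(child_of E)\<^sup>*\<^sup>* S M" "S \<in> dsets W E"
  shows "M \<subseteq> S" "M \<in> dsets W E"
  using assms by (induction rule: rtranclp_induct) (auto dest: child_of_dsets)

lemma dsets_nonempty: "S \<in> dsets W E \<Longrightarrow> S = W \<or> S \<noteq> {}"
  by (induction rule: dsets.induct) (auto dest: child_of_dsets simp: child_of_def)

lemma dsets_laminar:
  assumes S: "S \<in> dsets W E" and M: "M \<in> dsets W E" and meet: "S \<inter> M \<noteq> {}"
  shows "(child_of E)\<^sup>*\<^sup>* S M \<or> (child_of E)\<^sup>*\<^sup>* M S"
proof -
  have "(child_of E)\<^sup>*\<^sup>* W S" using S dsets_eq_descendants by blast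
  then show ?thesis using meet
  proof (induction rule: rtranclp_induct)
    case base
    then show ?case using M dsets_eq_descendants by blast
  next
    case (step S0 S)
    have S0: "S0 \<in> dsets W E" using step.hyps(1) dsets_eq_descendants by blast
    have "S \<subseteq> S0" using child_of_dsets[OF S0 step.hyps(2)] by auto
    then have IH: "(child_of E)\<^sup>*\<^sup>* S0 M \<or> (child_of E)\<^sup>*\<^sup>* M S0" using step.IH step.prems by blast
    show ?case
    proof (cases "(child_of E)\<^sup>*\<^sup>* M S0")
      case True
      then show ?thesis using step.hyps(2) by (meson rtranclp.rtrancl_into_rtrancl)
    next
      case False
      then have "(child_of E)\<^sup>*\<^sup>* S0 M" "M \<noteq> S0" using IH by auto
      then obtain C where C: "child_of E S0 C" "(child_of E)\<^sup>*\<^sup>* C M"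
        by (rule descendant_first_child)
      have "M \<subseteq> C" using descendant_dsets(1)[OF C(2)] child_of_dsets(4)[OF S0 C(1)] by blast
      then have "C = S" using child_of_disjoint[OF S0 C(1) step.hyps(2)] step.prems by blast
      then show ?thesis using C by auto
    qed
  qed
qed

lemma descendant_iff_subset:
  assumes S: "S \<in> dsets W E" and M: "M \<in> dsets W E" and "M \<noteq> {}"
  shows "(child_of E)\<^sup>*\<^sup>* S M \<longleftrightarrow> M \<subseteq> S"
proof
  assume sub: "M \<subseteq> S"
  then have "(child_of E)\<^sup>*\<^sup>* S M \<or> (child_of E)\<^sup>*\<^sup>* M S"
    using dsets_laminar[OF S M] \<open>M \<noteq> {}\<close> by blast
  moreover have "S = M" if "(child_of E)\<^sup>*\<^sup>* M S"
    using descendant_dsets(1)[OF that M] sub by blast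
  ultimately show "(child_of E)\<^sup>*\<^sup>* S M" by auto
qed (use descendant_dsets(1)[OF _ S] in blast)

lemma node_verts_unique:
  assumes S1: "S1 \<in> dsets W E" and S2: "S2 \<in> dsets W E"
    and x1: "x \<in> node_verts W E S1" and x2: "x \<in> node_verts W E S2"
  shows "S1 = S2"
  using x1
proof (cases rule: node_verts_cases)
  case (1 z)
  then have "z \<in> S2" "is_leaf E S2" using x2 by (simp_all add: Inl_in_node_verts_iff)
  then have "S1 \<inter> S2 \<noteq> {}" using 1 by blast
  moreover have "A = B" if "(child_of E)\<^sup>*\<^sup>* A B" "is_leaf E A" for A B
    using that by (cases rule: converse_rtranclpE) (auto simp: child_of_def)
  ultimately show ?thesis using dsets_laminar[OF S1 S2] 1 \<open>is_leaf E S2\<close> by blast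
next
  case (2 K)
  then have K2: "child_of E S2 K" using x2 by (simp add: marker_in_node_verts_iff)
  have same_parent: "A = B"
    if A: "A \<in> dsets W E" "child_of E A K" and B: "B \<in> dsets W E" "child_of E B K"
      and AB: "(child_of E)\<^sup>*\<^sup>* A B" for A B
  proof (rule ccontr)
    assume "A \<noteq> B"
    then obtain C where C: "child_of E A C" "(child_of E)\<^sup>*\<^sup>* C B"
      using descendant_first_child[OF AB] by blast
    have "B \<subseteq> C" using descendant_dsets(1)[OF C(2)] child_of_dsets(4)[OF A(1) C(1)] by blast
    moreover have K: "K \<subseteq> B" "K \<noteq> B" "K \<noteq> {}" using child_of_dsets[OF B] by auto
    ultimately have "K \<inter> C \<noteq> {}" by blast
    then have "K = C" using child_of_disjoint[OF A(1) A(2) C(1)] by blast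
    then show False using K \<open>B \<subseteq> C\<close> by blast
  qed
  have "K \<subseteq> S1" "K \<subseteq> S2" "K \<noteq> {}"
    using child_of_dsets[OF S1 2(2)] child_of_dsets[OF S2 K2] by auto
  then have "S1 \<inter> S2 \<noteq> {}" by blast
  then show ?thesis using dsets_laminar[OF S1 S2] same_parent[OF S1 2(2) S2 K2]
      same_parent[OF S2 K2 S1 2(2)] by auto
next
  case 3
  then show ?thesis using x2 by (simp add: parent_marker_in_node_verts_iff)
qed

end

lemma mt_isom_mverts: "mt_isom T1 T2 f \<Longrightarrow> x \<in> mverts T1 \<Longrightarrow> f x \<in> mverts T2"
  unfolding mt_isom_def using bij_betwE by blast

lemma mt_isom_inj_on: "mt_isom T1 T2 f \<Longrightarrow> inj_on f (mverts T1)"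
  unfolding mt_isom_def bij_betw_def by blast

lemma mt_isom_surj: "mt_isom T1 T2 f \<Longrightarrow> y \<in> mverts T2 \<Longrightarrow> \<exists>x\<in>mverts T1. y = f x"
  unfolding mt_isom_def bij_betw_def by blast

lemma mt_isom_comp:
  assumes f: "mt_isom T1 T2 f" and h: "mt_isom T2 T3 h"
  shows "mt_isom T1 T3 (h \<circ> f)"
proof -
  have "bij_betw (h \<circ> f) (mverts T1) (mverts T3)"
    using f h bij_betw_trans unfolding mt_isom_def by blast
  then show ?thesis
    using f h mt_isom_mverts[OF f] unfolding mt_isom_def by auto
qed

lemma mt_isom_cong:
  assumes f: "mt_isom T1 T2 f" and eq: "\<And>x. x \<in> mverts T1 \<Longrightarrow> f' x = f x"
  shows "mt_isom T1 T2 f'"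
proof -
  have "bij_betw f' (mverts T1) (mverts T2)"
    using f eq bij_betw_cong unfolding mt_isom_def by blast
  then show ?thesis using f eq unfolding mt_isom_def by auto
qed

lemma mt_isom_restrict: "mt_isom T1 T2 f \<Longrightarrow> mt_isom T1 T2 (restrict f (mverts T1))"
  by (erule mt_isom_cong) simp

lemma mt_isom_inv_into:
  assumes f: "mt_isom T1 T2 f"
  shows "mt_isom T2 T1 (inv_into (mverts T1) f)"
proof -
  let ?g = "inv_into (mverts T1) f"
  have bf: "bij_betw f (mverts T1) (mverts T2)" using f unfolding mt_isom_def by auto
  have bg: "bij_betw ?g (mverts T2) (mverts T1)" using bf bij_betw_inv_into by blast
  have g_in: "?g y \<in> mverts T1" if "y \<in> mverts T2" for y using bg that bij_betwE by blast
  have f_g: "f (?g y) = y" if "y \<in> mverts T2" for y using bf that bij_betw_inv_into_right by metis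
  show ?thesis unfolding mt_isom_def
  proof (intro conjI ballI)
    fix x y assume x: "x \<in> mverts T2" and y: "y \<in> mverts T2"
    show "x \<in> mnormal T2 \<longleftrightarrow> ?g x \<in> mnormal T1"
      using f g_in[OF x] f_g[OF x] unfolding mt_isom_def by metis
    show "(x, y) \<in> mnedges T2 \<longleftrightarrow> (?g x, ?g y) \<in> mnedges T1"
      "(x, y) \<in> mtedges T2 \<longleftrightarrow> (?g x, ?g y) \<in> mtedges T1"
      using f g_in[OF x] g_in[OF y] f_g[OF x] f_g[OF y] unfolding mt_isom_def by metis+
  qed (rule bg)
qed

lemma mt_isomorphic_refl: "mt_isomorphic T T"
  unfolding mt_isomorphic_def mt_isom_def by (auto intro: exI[of _ id])

lemma mt_isomorphic_sym: "mt_isomorphic T1 T2 \<Longrightarrow> mt_isomorphic T2 T1"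
  unfolding mt_isomorphic_def using mt_isom_inv_into by blast

lemma mt_isomorphic_trans: "mt_isomorphic T1 T2 \<Longrightarrow> mt_isomorphic T2 T3 \<Longrightarrow> mt_isomorphic T1 T3"
  unfolding mt_isomorphic_def using mt_isom_comp by blast

definition wf_mtree :: "'v mtree \<Rightarrow> bool" where
  "wf_mtree T \<longleftrightarrow> mnedges T \<subseteq> mverts T \<times> mverts T \<and> mtedges T \<subseteq> mverts T \<times> mverts T"

text \<open>An intrinsic description of the vertices of the root node, hence preserved by isomorphisms.\<close>
definition root_node_vertex :: "'v mtree \<Rightarrow> 'v \<Rightarrow> bool" where
  "root_node_vertex T x \<longleftrightarrow> x \<in> mverts T \<and> x \<notin> Range (mtedges T) \<and>
     (\<forall>z. (x, z) \<in> mnedges T \<longrightarrow> z \<notin> Range (mtedges T))"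

text \<open>The vertices below the head of a tree edge are those reachable from it by such steps.\<close>
definition mtree_step :: "'v mtree \<Rightarrow> 'v \<Rightarrow> 'v \<Rightarrow> bool" where
  "mtree_step T x y \<longleftrightarrow> (x, y) \<in> mtedges T \<or> ((x, y) \<in> mnedges T \<and> x \<in> Range (mtedges T))"

lemma mtree_step_mverts: "wf_mtree T \<Longrightarrow> mtree_step T x y \<Longrightarrow> x \<in> mverts T \<and> y \<in> mverts T"
  unfolding mtree_step_def wf_mtree_def by blast

context
  fixes T1 T2 :: "'v mtree" and f :: "'v \<Rightarrow> 'v"
  assumes wf1: "wf_mtree T1" and wf2: "wf_mtree T2" and f: "mt_isom T1 T2 f"
begin

lemma mt_isom_Range_mtedges:
  assumes x: "x \<in> mverts T1"
  shows "f x \<in> Range (mtedges T2) \<longleftrightarrow> x \<in> Range (mtedges T1)"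
proof
  assume "x \<in> Range (mtedges T1)"
  then obtain z where z: "(z, x) \<in> mtedges T1" by blast
  then have "z \<in> mverts T1" using wf1 unfolding wf_mtree_def by blast
  then show "f x \<in> Range (mtedges T2)" using f x z unfolding mt_isom_def by blast
next
  assume "f x \<in> Range (mtedges T2)"
  then obtain z' where z': "(z', f x) \<in> mtedges T2" by blast
  then obtain z where "z \<in> mverts T1" "z' = f z"
    using wf2 mt_isom_surj[OF f] unfolding wf_mtree_def by blast
  then show "x \<in> Range (mtedges T1)" using f x z' unfolding mt_isom_def by blast
qed

lemma mt_isom_root_node_vertex:
  assumes x: "x \<in> mverts T1"
  shows "root_node_vertex T2 (f x) \<longleftrightarrow> root_node_vertex T1 x"
proof -
  have "(\<forall>z'. (f x, z') \<in> mnedges T2 \<longrightarrow> z' \<notin> Range (mtedges T2)) \<longleftrightarrow>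
        (\<forall>z. (x, z) \<in> mnedges T1 \<longrightarrow> z \<notin> Range (mtedges T1))"
  proof (intro iffI allI impI)
    fix z assume hyp: "\<forall>z'. (f x, z') \<in> mnedges T2 \<longrightarrow> z' \<notin> Range (mtedges T2)"
      and e: "(x, z) \<in> mnedges T1"
    then have "z \<in> mverts T1" using wf1 unfolding wf_mtree_def by blast
    moreover have "(f x, f z) \<in> mnedges T2" using f x e \<open>z \<in> mverts T1\<close> unfolding mt_isom_def by blast
    ultimately show "z \<notin> Range (mtedges T1)" using hyp mt_isom_Range_mtedges by blast
  next
    fix z' assume hyp: "\<forall>z. (x, z) \<in> mnedges T1 \<longrightarrow> z \<notin> Range (mtedges T1)"
      and e: "(f x, z') \<in> mnedges T2"
    then obtain z where z: "z \<in> mverts T1" "z' = f z"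
      using wf2 mt_isom_surj[OF f] unfolding wf_mtree_def by blast
    then have "(x, z) \<in> mnedges T1" using f x e unfolding mt_isom_def by blast
    then show "z' \<notin> Range (mtedges T2)" using hyp mt_isom_Range_mtedges z by blast
  qed
  then show ?thesis
    unfolding root_node_vertex_def using x mt_isom_mverts[OF f x] mt_isom_Range_mtedges[OF x] by blast
qed

lemma mt_isom_mtree_step:
  assumes "x \<in> mverts T1" "y \<in> mverts T1"
  shows "mtree_step T2 (f x) (f y) \<longleftrightarrow> mtree_step T1 x y"
  using assms mt_isom_Range_mtedges f unfolding mtree_step_def mt_isom_def by blast

lemma mt_isom_reachable:
  assumes x: "x \<in> mverts T1"
  shows "f ` {y. (mtree_step T1)\<^sup>*\<^sup>* x y} = {y'. (mtree_step T2)\<^sup>*\<^sup>* (f x) y'}"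
proof -
  have "(mtree_step T2)\<^sup>*\<^sup>* (f x) (f y)" if "(mtree_step T1)\<^sup>*\<^sup>* x y" for y
    using that
  proof (induction rule: rtranclp_induct)
    case (step y z)
    have "y \<in> mverts T1" "z \<in> mverts T1" using mtree_step_mverts[OF wf1 step.hyps(2)] by auto
    then have "mtree_step T2 (f y) (f z)" using mt_isom_mtree_step step.hyps(2) by blast
    with step.IH show ?case by (rule rtranclp.rtrancl_into_rtrancl)
  qed simp
  moreover have "\<exists>y. y' = f y \<and> (mtree_step T1)\<^sup>*\<^sup>* x y" if "(mtree_step T2)\<^sup>*\<^sup>* (f x) y'" for y'
    using that
  proof (induction rule: rtranclp_induct)
    case (step y' z')
    obtain y where y: "y' = f y" "(mtree_step T1)\<^sup>*\<^sup>* x y" using step.IH by blast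
    have "y \<in> mverts T1"
      using y(2) x mtree_step_mverts[OF wf1] by (cases rule: rtranclp.cases) auto
    moreover obtain z where z: "z \<in> mverts T1" "z' = f z"
      using mtree_step_mverts[OF wf2 step.hyps(2)] mt_isom_surj[OF f] by blast
    ultimately have "mtree_step T1 y z" using mt_isom_mtree_step step.hyps(2) y(1) by blast
    then have "(mtree_step T1)\<^sup>*\<^sup>* x z" using y(2) by (rule rtranclp.rtrancl_into_rtrancl[rotated])
    then show ?case using z(2) by blast
  qed blast
  ultimately show ?thesis by blast
qed

end

lemma mverts_modtree_iff: "x \<in> mverts (modtree W E) \<longleftrightarrow> (\<exists>S\<in>dsets W E. x \<in> node_verts W E S)"
  unfolding modtree_def by simp

lemma mnedges_modtree_iff: "e \<in> mnedges (modtree W E) \<longleftrightarrow> (\<exists>S\<in>dsets W E. e \<in> node_edges W E S)"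
  unfolding modtree_def by simp

lemma mtedges_modtree_iff: "(x, y) \<in> mtedges (modtree W E) \<longleftrightarrow>
    (\<exists>M. x = Inr (M, False) \<and> y = Inr (M, True) \<and> M \<in> dsets W E \<and> M \<noteq> W)"
  unfolding modtree_def by auto

lemma mnormal_modtree: "mnormal (modtree W E) = Inl ` W"
  unfolding modtree_def by simp

lemma Range_mtedges_modtree:
  "y \<in> Range (mtedges (modtree W E)) \<longleftrightarrow> (\<exists>M. y = Inr (M, True) \<and> M \<in> dsets W E \<and> M \<noteq> W)"
  unfolding Range_iff mtedges_modtree_iff by auto

context
  fixes W :: "'a set" and E :: "'a \<Rightarrow> 'a \<Rightarrow> bool"
  assumes g: "fin_graph W E"
begin

lemma wf_modtree: "wf_mtree (modtree W E)"
proof -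
  have "x \<in> mverts (modtree W E) \<and> y \<in> mverts (modtree W E)"
    if "(x, y) \<in> mnedges (modtree W E)" for x y
    using that node_edges_in_node_verts unfolding mnedges_modtree_iff mverts_modtree_iff by blast
  moreover have "x \<in> mverts (modtree W E) \<and> y \<in> mverts (modtree W E)"
    if e: "(x, y) \<in> mtedges (modtree W E)" for x y
  proof -
    obtain M where M: "x = Inr (M, False)" "y = Inr (M, True)" "M \<in> dsets W E" "M \<noteq> W"
      using e unfolding mtedges_modtree_iff by blast
    have "(child_of E)\<^sup>*\<^sup>* W M" using M(3) dsets_eq_descendants by blast
    then obtain S where "(child_of E)\<^sup>*\<^sup>* W S" "child_of E S M"
      using M(4) by (blast elim: rtranclp.cases)
    then have "S \<in> dsets W E" "x \<in> node_verts W E S"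
      using M(1) by (simp_all add: dsets_eq_descendants marker_in_node_verts_iff)
    moreover have "y \<in> node_verts W E M" using M(2,4) by (simp add: parent_marker_in_node_verts_iff)
    ultimately show ?thesis using M(3) unfolding mverts_modtree_iff by blast
  qed
  ultimately show ?thesis unfolding wf_mtree_def by auto
qed

lemma root_node_vertex_modtree: "root_node_vertex (modtree W E) x \<longleftrightarrow> x \<in> node_verts W E W"
proof
  assume x: "x \<in> node_verts W E W"
  have W: "W \<in> dsets W E" by (rule dsets.root)
  have "z \<notin> Range (mtedges (modtree W E))" if e: "(x, z) \<in> mnedges (modtree W E)" for z
  proof -
    obtain S where S: "S \<in> dsets W E" "(x, z) \<in> node_edges W E S"
      using e unfolding mnedges_modtree_iff by blast
    then have "S = W" using node_verts_unique[OF g S(1) W] node_edges_in_node_verts x by blast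
    then have "z \<in> node_verts W E W" using S(2) node_edges_in_node_verts(2) by blast
    then show ?thesis by (auto simp: Range_mtedges_modtree parent_marker_in_node_verts_iff)
  qed
  moreover have "x \<notin> Range (mtedges (modtree W E))"
    using x by (auto simp: Range_mtedges_modtree parent_marker_in_node_verts_iff)
  ultimately show "root_node_vertex (modtree W E) x"
    using x W unfolding root_node_vertex_def mverts_modtree_iff by blast
next
  assume r: "root_node_vertex (modtree W E) x"
  then obtain S where S: "S \<in> dsets W E" "x \<in> node_verts W E S"
    unfolding root_node_vertex_def mverts_modtree_iff by blast
  show "x \<in> node_verts W E W"
  proof (rule ccontr)
    assume "x \<notin> node_verts W E W"
    then have SW: "S \<noteq> W" using S by auto
    then have head: "Inr (S, True) \<in> Range (mtedges (modtree W E))"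
      using S unfolding Range_mtedges_modtree by blast
    show False
    proof (cases "x = Inr (S, True)")
      case True then show False using r head unfolding root_node_vertex_def by blast
    next
      case False
      then have "(x, Inr (S, True)) \<in> node_edges W E S"
        using node_edges_parent_marker(2) SW S by blast
      then show False
        using r head S(1) unfolding root_node_vertex_def mnedges_modtree_iff by blast
    qed
  qed
qed

end

lemma marker_set_Inr [simp]: "marker_set (Inr (M, b)) = M"
  unfolding marker_set_def by simp

lemma subtree_Inr [simp]: "subtree E (Inr (M, b)) = modtree M E"
  unfolding subtree_def by simp

text \<open>For a marker vertex u of the root node, anchor u is the marker vertex m' of the
  child node, and branch E u collects all vertices hanging below the tree edge (u, anchor u).\<close>
definition anchor :: "'a mvert \<Rightarrow> 'a mvert" where
  "anchor u = Inr (marker_set u, True)"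

definition branch :: "('a \<Rightarrow> 'a \<Rightarrow> bool) \<Rightarrow> 'a mvert \<Rightarrow> 'a mvert set" where
  "branch E u = insert (anchor u) (mverts (subtree E u))"

lemma anchor_Inr [simp]: "anchor (Inr (M, b)) = Inr (M, True)"
  unfolding anchor_def by simp

lemma anchor_in_branch: "anchor u \<in> branch E u"
  unfolding branch_def by simp

lemma subtree_subset_branch: "mverts (subtree E u) \<subseteq> branch E u"
  unfolding branch_def by blast

lemma branch_cases:
  assumes "x \<in> branch E u"
  obtains "x = anchor u" | "x \<in> mverts (subtree E u)" "x \<noteq> anchor u"
  using assms unfolding branch_def by blast

lemma anchor_not_normal: "anchor u \<notin> Inl ` V"
  unfolding anchor_def by auto

lemma root_markers_iff_root_node: "u \<in> root_markers V E \<longleftrightarrow> u \<in> root_node V E \<and> u \<notin> Inl ` V"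
  unfolding root_markers_def mnormal_modtree by simp

lemma root_markers_subset: "root_markers V E \<subseteq> root_node V E"
  unfolding root_markers_def by blast

lemma root_node_subset: "root_node V E \<subseteq> mverts (modtree V E)"
  unfolding root_node_def by (auto simp: mverts_modtree_iff intro: bexI[OF _ dsets.root])

lemma node_verts_child:
  "S \<noteq> V \<Longrightarrow> x \<in> node_verts M E S \<longleftrightarrow> x \<in> node_verts V E S \<and> x \<noteq> Inr (M, True)"
  by (cases "S = M"; cases "is_leaf E S") (auto simp: node_verts_def)

lemma node_edges_child:
  assumes SV: "S \<noteq> V"
  shows "(x, y) \<in> node_edges M E S \<longleftrightarrow>
    (x, y) \<in> node_edges V E S \<and> x \<noteq> Inr (M, True) \<and> y \<noteq> Inr (M, True)"
proof -
  have nv: "z \<in> node_verts M E S \<longleftrightarrow> z \<in> node_verts V E S \<and> z \<noteq> Inr (M, True)" for z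
    using node_verts_child[OF SV] by blast
  have inner: "(x, y) \<in> node_inner_edges E S \<Longrightarrow> x \<noteq> Inr (M, True) \<and> y \<noteq> Inr (M, True)"
    using parent_marker_notin_inner_edges by blast
  show ?thesis
  proof (cases "S = M")
    case True
    then show ?thesis unfolding node_edges_iff[of x y M E S] node_edges_iff[of x y V E S]
      using inner SV by auto
  next
    case False
    have "Inr (M, True) \<notin> node_verts V E S"
      using False by (simp add: parent_marker_in_node_verts_iff)
    moreover have "(x, y) \<in> node_edges M E S \<longleftrightarrow> (x, y) \<in> node_inner_edges E S \<or>
      ((x = Inr (S, True) \<and> y \<in> node_verts V E S \<and> y \<noteq> Inr (M, True) \<and> y \<noteq> Inr (S, True)) \<or>
       (y = Inr (S, True) \<and> x \<in> node_verts V E S \<and> x \<noteq> Inr (M, True) \<and> x \<noteq> Inr (S, True)))"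
      unfolding node_edges_iff[of x y M E S] Diff_iff singleton_iff nv using False by blast
    moreover have "(x, y) \<in> node_edges V E S \<longleftrightarrow> (x, y) \<in> node_inner_edges E S \<or>
      ((x = Inr (S, True) \<and> y \<in> node_verts V E S \<and> y \<noteq> Inr (S, True)) \<or>
       (y = Inr (S, True) \<and> x \<in> node_verts V E S \<and> x \<noteq> Inr (S, True)))"
      unfolding node_edges_iff[of x y V E S] Diff_iff singleton_iff using SV by blast
    ultimately show ?thesis using inner False by auto
  qed
qed

context
  fixes V :: "'a set" and E :: "'a \<Rightarrow> 'a \<Rightarrow> bool"
  assumes g: "fin_graph V E"
begin

lemma root_markers_iff: "u \<in> root_markers V E \<longleftrightarrow> (\<exists>M. u = Inr (M, False) \<and> child_of E V M)"
proof
  assume u: "u \<in> root_markers V E"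
  then have "u \<in> node_verts V E V" "u \<notin> Inl ` V"
    unfolding root_markers_def root_node_def mnormal_modtree by auto
  then show "\<exists>M. u = Inr (M, False) \<and> child_of E V M"
    by (cases rule: node_verts_cases) auto
next
  assume "\<exists>M. u = Inr (M, False) \<and> child_of E V M"
  then show "u \<in> root_markers V E"
    unfolding root_markers_def root_node_def mnormal_modtree
    by (auto simp: marker_in_node_verts_iff)
qed

lemma root_markersE:
  assumes "u \<in> root_markers V E"
  obtains M where "u = Inr (M, False)" "child_of E V M"
  using assms unfolding root_markers_iff by blast

lemma child_of_root:
  assumes "child_of E V M"
  shows "M \<subseteq> V" "M \<noteq> {}" "M \<noteq> V" "M \<in> dsets V E" "fin_graph M E"
  using child_of_dsets[OF g dsets.root assms] fin_graph_subset[OF g] by auto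

lemma fin_graph_root_marker: "u \<in> root_markers V E \<Longrightarrow> fin_graph (marker_set u) E"
  by (erule root_markersE) (simp add: child_of_root)

lemma dsets_child:
  assumes M: "child_of E V M"
  shows "S \<in> dsets M E \<longleftrightarrow> S \<in> dsets V E \<and> S \<subseteq> M"
proof
  assume "S \<in> dsets M E"
  then have MS: "(child_of E)\<^sup>*\<^sup>* M S" by (simp add: dsets_eq_descendants)
  then have "(child_of E)\<^sup>*\<^sup>* V S" using M by (simp add: converse_rtranclp_into_rtranclp)
  then show "S \<in> dsets V E \<and> S \<subseteq> M"
    using descendant_dsets(1)[OF g MS child_of_root(4)[OF M]] by (simp add: dsets_eq_descendants)
next
  assume S: "S \<in> dsets V E \<and> S \<subseteq> M"
  then have "S \<noteq> {}" using dsets_nonempty[OF g] child_of_root[OF M] by blast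
  then have "(child_of E)\<^sup>*\<^sup>* M S" using descendant_iff_subset[OF g child_of_root(4)[OF M]] S by simp
  then show "S \<in> dsets M E" by (simp add: dsets_eq_descendants)
qed

lemma mverts_modtree_child:
  assumes M: "child_of E V M"
  shows "x \<in> mverts (modtree M E) \<longleftrightarrow>
    (\<exists>S\<in>dsets V E. S \<subseteq> M \<and> x \<in> node_verts V E S) \<and> x \<noteq> Inr (M, True)"
proof
  assume "x \<in> mverts (modtree M E)"
  then obtain S where S: "S \<in> dsets M E" "x \<in> node_verts M E S" unfolding mverts_modtree_iff by blast
  have S': "S \<in> dsets V E" "S \<subseteq> M" using S(1) dsets_child[OF M] by auto
  then have "S \<noteq> V" using child_of_root[OF M] by auto
  then show "(\<exists>S\<in>dsets V E. S \<subseteq> M \<and> x \<in> node_verts V E S) \<and> x \<noteq> Inr (M, True)"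
    using S(2) S' node_verts_child[of S V x M E] by blast
next
  assume "(\<exists>S\<in>dsets V E. S \<subseteq> M \<and> x \<in> node_verts V E S) \<and> x \<noteq> Inr (M, True)"
  then obtain S where S: "S \<in> dsets V E" "S \<subseteq> M" "x \<in> node_verts V E S" "x \<noteq> Inr (M, True)"
    by blast
  have "S \<in> dsets M E" using S dsets_child[OF M] by auto
  moreover have "S \<noteq> V" using S(2) child_of_root[OF M] by auto
  then have "x \<in> node_verts M E S" using S(3,4) node_verts_child[of S V x M E] by blast
  ultimately show "x \<in> mverts (modtree M E)" unfolding mverts_modtree_iff by blast
qed

lemma branch_iff:
  assumes u: "u \<in> root_markers V E"
  shows "x \<in> branch E u \<longleftrightarrow> (\<exists>S\<in>dsets V E. S \<subseteq> marker_set u \<and> x \<in> node_verts V E S)"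
proof -
  obtain M where M: "u = Inr (M, False)" "child_of E V M" using u by (rule root_markersE)
  have "Inr (M, True) \<in> node_verts V E M"
    using child_of_root[OF M(2)] by (simp add: parent_marker_in_node_verts_iff)
  then show ?thesis
    using child_of_root(4)[OF M(2)] mverts_modtree_child[OF M(2)]
    unfolding branch_def M(1) by auto
qed

lemma anchor_notin_subtree: "u \<in> root_markers V E \<Longrightarrow> anchor u \<notin> mverts (subtree E u)"
  by (auto elim!: root_markersE simp: mverts_modtree_child)

lemma branch_subset:
  assumes u: "u \<in> root_markers V E"
  shows "branch E u \<subseteq> mverts (modtree V E)"
proof
  fix x assume "x \<in> branch E u"
  then obtain S where "S \<in> dsets V E" "x \<in> node_verts V E S" unfolding branch_iff[OF u] by blast
  then show "x \<in> mverts (modtree V E)" unfolding mverts_modtree_iff by blast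
qed

lemma mverts_modtree_cases:
  assumes "x \<in> mverts (modtree V E)"
  obtains "x \<in> root_node V E" | u where "u \<in> root_markers V E" "x \<in> branch E u"
proof -
  obtain S where S: "S \<in> dsets V E" "x \<in> node_verts V E S"
    using assms unfolding mverts_modtree_iff by blast
  show thesis
  proof (cases "S = V")
    case True then show thesis using S that(1) unfolding root_node_def by simp
  next
    case False
    have "(child_of E)\<^sup>*\<^sup>* V S" using S dsets_eq_descendants by blast
    then obtain C where C: "child_of E V C" "(child_of E)\<^sup>*\<^sup>* C S"
      using False by (rule descendant_first_child)
    have "S \<subseteq> C" using descendant_dsets(1)[OF g C(2) child_of_root(4)[OF C(1)]] .
    moreover have C_marker: "Inr (C, False) \<in> root_markers V E"
      unfolding root_markers_iff using C(1) by blast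
    ultimately have "x \<in> branch E (Inr (C, False))"
      unfolding branch_iff[OF C_marker] using S by auto
    then show thesis using that(2) C_marker by blast
  qed
qed

lemma root_node_disjoint_branch:
  assumes u: "u \<in> root_markers V E" and x: "x \<in> root_node V E"
  shows "x \<notin> branch E u"
proof
  assume "x \<in> branch E u"
  then obtain S where S: "S \<in> dsets V E" "S \<subseteq> marker_set u" "x \<in> node_verts V E S"
    unfolding branch_iff[OF u] by blast
  have "S = V" using node_verts_unique[OF g S(1) dsets.root S(3)] x unfolding root_node_def .
  moreover obtain M where M: "u = Inr (M, False)" "child_of E V M" using u by (rule root_markersE)
  ultimately show False using S(2) child_of_root(1,3)[OF M(2)] by auto
qed

lemma branch_disjoint:
  assumes u: "u \<in> root_markers V E" and u': "u' \<in> root_markers V E"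
    and x: "x \<in> branch E u" "x \<in> branch E u'"
  shows "u = u'"
proof -
  obtain M where M: "u = Inr (M, False)" "child_of E V M" using u by (rule root_markersE)
  obtain M' where M': "u' = Inr (M', False)" "child_of E V M'" using u' by (rule root_markersE)
  obtain S where S: "S \<in> dsets V E" "S \<subseteq> M" "x \<in> node_verts V E S"
    using x(1) branch_iff[OF u] M(1) by auto
  obtain S' where S': "S' \<in> dsets V E" "S' \<subseteq> M'" "x \<in> node_verts V E S'"
    using x(2) branch_iff[OF u'] M'(1) by auto
  have "S = S'" using node_verts_unique[OF g S(1) S'(1) S(3) S'(3)] .
  moreover have "S \<noteq> {}" using dsets_nonempty[OF g S(1)] S(2) child_of_root[OF M(2)] by auto
  ultimately have "M \<inter> M' \<noteq> {}" using S(2) S'(2) by auto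
  then show "u = u'" using child_of_disjoint[OF g dsets.root M(2) M'(2)] M(1) M'(1) by blast
qed

lemma node_in_branch:
  assumes u: "u \<in> root_markers V E" and S: "S \<in> dsets V E"
    and x: "x \<in> node_verts V E S" "x \<in> branch E u"
  shows "S \<subseteq> marker_set u"
proof -
  obtain S' where "S' \<in> dsets V E" "S' \<subseteq> marker_set u" "x \<in> node_verts V E S'"
    using x(2) unfolding branch_iff[OF u] by blast
  then show ?thesis using node_verts_unique[OF g S] x(1) by blast
qed

lemma mnedges_subtree:
  assumes u: "u \<in> root_markers V E"
    and x: "x \<in> mverts (subtree E u)" and y: "y \<in> mverts (subtree E u)"
  shows "(x, y) \<in> mnedges (modtree V E) \<longleftrightarrow> (x, y) \<in> mnedges (subtree E u)"
proof -
  obtain M where M: "u = Inr (M, False)" "child_of E V M" using u by (rule root_markersE)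
  have not_anchor: "x \<noteq> Inr (M, True)" "y \<noteq> Inr (M, True)"
    using x y anchor_notin_subtree[OF u] M(1) by auto
  show ?thesis
  proof
    assume "(x, y) \<in> mnedges (subtree E u)"
    then obtain S where S: "S \<in> dsets M E" "(x, y) \<in> node_edges M E S"
      unfolding M(1) subtree_Inr mnedges_modtree_iff by blast
    have S': "S \<in> dsets V E" "S \<subseteq> M" using dsets_child[OF M(2)] S(1) by auto
    then have "S \<noteq> V" using child_of_root[OF M(2)] by auto
    then have "(x, y) \<in> node_edges V E S" using node_edges_child[of S V x y M E] S(2) by blast
    then show "(x, y) \<in> mnedges (modtree V E)" using S' unfolding mnedges_modtree_iff by blast
  next
    assume "(x, y) \<in> mnedges (modtree V E)"
    then obtain S where S: "S \<in> dsets V E" "(x, y) \<in> node_edges V E S"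
      unfolding mnedges_modtree_iff by blast
    have "x \<in> branch E u" using x subtree_subset_branch by blast
    then have "S \<subseteq> M"
      using node_in_branch[OF u S(1) node_edges_in_node_verts(1)[OF S(2)]] M(1) by simp
    moreover from this have "S \<noteq> V" using child_of_root[OF M(2)] by auto
    ultimately have "(x, y) \<in> node_edges M E S" "S \<in> dsets M E"
      using node_edges_child[of S V x y M E] S not_anchor dsets_child[OF M(2)] by blast+
    then show "(x, y) \<in> mnedges (subtree E u)" unfolding M(1) subtree_Inr mnedges_modtree_iff by blast
  qed
qed

lemma mnedges_anchor:
  assumes u: "u \<in> root_markers V E" and y: "y \<in> mverts (subtree E u)"
  shows "(anchor u, y) \<in> mnedges (modtree V E) \<longleftrightarrow> root_node_vertex (subtree E u) y"
    and "(y, anchor u) \<in> mnedges (modtree V E) \<longleftrightarrow> root_node_vertex (subtree E u) y"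
proof -
  obtain M where M: "u = Inr (M, False)" "child_of E V M" using u by (rule root_markersE)
  have M': "M \<noteq> V" "M \<in> dsets V E" using child_of_root[OF M(2)] by auto
  have y_ne: "y \<noteq> Inr (M, True)" using y anchor_notin_subtree[OF u] M(1) by auto
  have root: "root_node_vertex (modtree M E) y \<longleftrightarrow> y \<in> node_verts V E M"
    unfolding root_node_vertex_modtree[OF child_of_root(5)[OF M(2)]]
    using node_verts_child[of M V y M E] M'(1) y_ne by blast
  have only_node: "S = M" if "S \<in> dsets V E" "(a, b) \<in> node_edges V E S" "Inr (M, True) \<in> {a, b}"
    for S a b
    using node_edges_in_node_verts[OF that(2)] that(3) by (auto simp: parent_marker_in_node_verts_iff)
  have "(Inr (M, True), y) \<in> mnedges (modtree V E) \<longleftrightarrow> (Inr (M, True), y) \<in> node_edges V E M"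
    "(y, Inr (M, True)) \<in> mnedges (modtree V E) \<longleftrightarrow> (y, Inr (M, True)) \<in> node_edges V E M"
    unfolding mnedges_modtree_iff using M'(2) only_node by blast+
  then show "(anchor u, y) \<in> mnedges (modtree V E) \<longleftrightarrow> root_node_vertex (subtree E u) y"
    and "(y, anchor u) \<in> mnedges (modtree V E) \<longleftrightarrow> root_node_vertex (subtree E u) y"
    unfolding M(1) subtree_Inr anchor_Inr root node_edges_parent_marker using M'(1) y_ne by auto
qed

lemma mnedges_modtree_cases:
  assumes e: "(x, y) \<in> mnedges (modtree V E)"
  obtains "x \<in> root_node V E" "y \<in> root_node V E"
    | u where "u \<in> root_markers V E" "x \<in> branch E u" "y \<in> branch E u"
proof -
  obtain S where S: "S \<in> dsets V E" "(x, y) \<in> node_edges V E S"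
    using e unfolding mnedges_modtree_iff by blast
  note xy = node_edges_in_node_verts[OF S(2)]
  show thesis
  proof (cases "S = V")
    case True then show thesis using that(1) xy unfolding root_node_def by simp
  next
    case False
    have "(child_of E)\<^sup>*\<^sup>* V S" using S(1) by (simp add: dsets_eq_descendants)
    then obtain C where C: "child_of E V C" "(child_of E)\<^sup>*\<^sup>* C S"
      using False by (rule descendant_first_child)
    have CR: "Inr (C, False) \<in> root_markers V E" unfolding root_markers_iff using C(1) by blast
    have "S \<subseteq> C" using descendant_dsets(1)[OF g C(2) child_of_root(4)[OF C(1)]] .
    then have "x \<in> branch E (Inr (C, False))" "y \<in> branch E (Inr (C, False))"
      unfolding branch_iff[OF CR] using S(1) xy by auto
    then show thesis using that(2) CR by blast
  qed
qed

lemma anchor_no_loop: "(anchor u, anchor u) \<notin> mnedges (modtree V E)"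
proof
  assume "(anchor u, anchor u) \<in> mnedges (modtree V E)"
  then obtain S where S: "S \<in> dsets V E" "(anchor u, anchor u) \<in> node_edges V E S"
    unfolding mnedges_modtree_iff by blast
  then have "S = marker_set u"
    using node_edges_in_node_verts(1)[OF S(2)] by (simp add: anchor_def parent_marker_in_node_verts_iff)
  then show False using S(2) node_edges_parent_marker(1)[of S "anchor u"] by (simp add: anchor_def)
qed

lemma mnedges_root_node_other:
  assumes x: "x \<in> root_node V E" and y: "y \<notin> root_node V E"
  shows "(x, y) \<notin> mnedges (modtree V E)" "(y, x) \<notin> mnedges (modtree V E)"
  using assms root_node_disjoint_branch
  by (auto elim: mnedges_modtree_cases)

lemma mnedges_branch_other:
  assumes u: "u \<in> root_markers V E" and u': "u' \<in> root_markers V E" "u \<noteq> u'"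
    and x: "x \<in> branch E u" and y: "y \<in> branch E u'"
  shows "(x, y) \<notin> mnedges (modtree V E)"
proof
  assume "(x, y) \<in> mnedges (modtree V E)"
  then show False
  proof (cases rule: mnedges_modtree_cases)
    case 1 then show False using root_node_disjoint_branch[OF u] x by blast
  next
    case (2 w)
    then have "u = w" "u' = w"
      using branch_disjoint[OF u 2(1) x 2(2)] branch_disjoint[OF u'(1) 2(1) y 2(3)] by auto
    then show False using u'(2) by simp
  qed
qed

lemma mtedges_subtree:
  assumes u: "u \<in> root_markers V E"
    and x: "x \<in> mverts (subtree E u)" and y: "y \<in> mverts (subtree E u)"
  shows "(x, y) \<in> mtedges (modtree V E) \<longleftrightarrow> (x, y) \<in> mtedges (subtree E u)"
proof -
  obtain M where M: "u = Inr (M, False)" "child_of E V M" using u by (rule root_markersE)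
  show ?thesis
  proof
    assume "(x, y) \<in> mtedges (subtree E u)"
    then obtain K where K: "x = Inr (K, False)" "y = Inr (K, True)" "K \<in> dsets M E" "K \<noteq> M"
      unfolding M(1) subtree_Inr mtedges_modtree_iff by blast
    have "K \<in> dsets V E" "K \<subseteq> M" using dsets_child[OF M(2)] K(3) by auto
    moreover from this have "K \<noteq> V" using child_of_root[OF M(2)] by auto
    ultimately show "(x, y) \<in> mtedges (modtree V E)" unfolding mtedges_modtree_iff using K by blast
  next
    assume "(x, y) \<in> mtedges (modtree V E)"
    then obtain K where K: "x = Inr (K, False)" "y = Inr (K, True)" "K \<in> dsets V E" "K \<noteq> V"
      unfolding mtedges_modtree_iff by blast
    have "y \<in> node_verts V E K" using K by (simp add: parent_marker_in_node_verts_iff)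
    moreover have "y \<in> branch E u" using y subtree_subset_branch by blast
    ultimately have "K \<subseteq> M" using node_in_branch[OF u K(3)] M(1) by simp
    then have "K \<in> dsets M E" using dsets_child[OF M(2)] K(3) by auto
    moreover have "K \<noteq> M" using y K(2) anchor_notin_subtree[OF u] M(1) by auto
    ultimately show "(x, y) \<in> mtedges (subtree E u)"
      unfolding M(1) subtree_Inr mtedges_modtree_iff using K by blast
  qed
qed

lemma mtedges_modtree_root:
  "(x, y) \<in> mtedges (modtree V E) \<longleftrightarrow>
    (x \<in> root_markers V E \<and> y = anchor x) \<or>
    (\<exists>u\<in>root_markers V E. x \<in> mverts (subtree E u) \<and> y \<in> mverts (subtree E u) \<and>
       (x, y) \<in> mtedges (subtree E u))"
proof
  assume e: "(x, y) \<in> mtedges (modtree V E)"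
  then obtain K where K: "x = Inr (K, False)" "y = Inr (K, True)" "K \<in> dsets V E" "K \<noteq> V"
    unfolding mtedges_modtree_iff by blast
  have "(child_of E)\<^sup>*\<^sup>* V K" using K(3) by (simp add: dsets_eq_descendants)
  then obtain C where C: "child_of E V C" "(child_of E)\<^sup>*\<^sup>* C K"
    using K(4) by (rule descendant_first_child)
  have CR: "Inr (C, False) \<in> root_markers V E" unfolding root_markers_iff using C(1) by blast
  show "(x \<in> root_markers V E \<and> y = anchor x) \<or>
    (\<exists>u\<in>root_markers V E. x \<in> mverts (subtree E u) \<and> y \<in> mverts (subtree E u) \<and>
       (x, y) \<in> mtedges (subtree E u))"
  proof (cases "K = C")
    case True then show ?thesis using CR K by simp
  next
    case False
    have "K \<in> dsets C E" using C(2) by (simp add: dsets_eq_descendants)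
    then have "(x, y) \<in> mtedges (modtree C E)" unfolding mtedges_modtree_iff using K False by blast
    moreover from this have "x \<in> mverts (modtree C E) \<and> y \<in> mverts (modtree C E)"
      using wf_modtree[OF child_of_root(5)[OF C(1)]] unfolding wf_mtree_def by blast
    ultimately show ?thesis using CR by force
  qed
next
  assume "(x \<in> root_markers V E \<and> y = anchor x) \<or>
    (\<exists>u\<in>root_markers V E. x \<in> mverts (subtree E u) \<and> y \<in> mverts (subtree E u) \<and>
       (x, y) \<in> mtedges (subtree E u))"
  then show "(x, y) \<in> mtedges (modtree V E)"
  proof (elim disjE conjE bexE)
    assume "x \<in> root_markers V E" "y = anchor x"
    then show ?thesis unfolding mtedges_modtree_iff
      by (auto elim!: root_markersE dest: child_of_root)
  qed (use mtedges_subtree in blast)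
qed

lemma mnormal_subtree:
  assumes u: "u \<in> root_markers V E" and x: "x \<in> mverts (subtree E u)"
  shows "x \<in> mnormal (modtree V E) \<longleftrightarrow> x \<in> mnormal (subtree E u)"
proof -
  obtain M where M: "u = Inr (M, False)" "child_of E V M" using u by (rule root_markersE)
  have "z \<in> M" if "x = Inl z" for z
  proof -
    obtain S where S: "S \<in> dsets M E" "x \<in> node_verts M E S"
      using x unfolding M(1) subtree_Inr mverts_modtree_iff by blast
    then show ?thesis using that dsets_child[OF M(2)] by (auto simp: Inl_in_node_verts_iff)
  qed
  then show ?thesis using child_of_root(1)[OF M(2)]
    unfolding M(1) subtree_Inr mnormal_modtree by blast
qed

lemma reachable_from_anchor_subset:
  assumes u: "u \<in> root_markers V E" and r: "(mtree_step (modtree V E))\<^sup>*\<^sup>* (anchor u) y"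
  shows "y \<in> branch E u"
  using r
proof (induction rule: rtranclp_induct)
  case base then show ?case by (rule anchor_in_branch)
next
  case (step y z)
  have same_branch: "z \<in> branch E u" if "u' \<in> root_markers V E" "y \<in> branch E u'" "z \<in> branch E u'" for u'
    using branch_disjoint[OF u that(1) step.IH that(2)] that(3) by simp
  have not_root: "y \<notin> root_node V E" using root_node_disjoint_branch[OF u] step.IH by blast
  show ?case
  proof (cases "(y, z) \<in> mtedges (modtree V E)")
    case True
    then consider "y \<in> root_markers V E"
      | u' where "u' \<in> root_markers V E" "y \<in> mverts (subtree E u')" "z \<in> mverts (subtree E u')"
      unfolding mtedges_modtree_root by blast
    then show ?thesis
    proof cases
      case 1 then show ?thesis using not_root root_markers_subset[of V E] by blast
    next
      case 2 then show ?thesis using same_branch subtree_subset_branch by blast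
    qed
  next
    case False
    then have "(y, z) \<in> mnedges (modtree V E)" using step.hyps(2) unfolding mtree_step_def by blast
    then show ?thesis
      by (cases rule: mnedges_modtree_cases) (use not_root same_branch in blast)+
  qed
qed

lemma reachable_from_parent_marker:
  assumes S: "S \<in> dsets V E" "S \<noteq> V" and w: "w \<in> node_verts V E S"
  shows "(mtree_step (modtree V E))\<^sup>*\<^sup>* (Inr (S, True)) w"
proof (cases "w = Inr (S, True)")
  case False
  then have "(Inr (S, True), w) \<in> mnedges (modtree V E)"
    using S w node_edges_parent_marker(1) unfolding mnedges_modtree_iff by blast
  moreover have "Inr (S, True) \<in> Range (mtedges (modtree V E))"
    using S unfolding Range_mtedges_modtree by blast
  ultimately have "mtree_step (modtree V E) (Inr (S, True)) w" unfolding mtree_step_def by blast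
  then show ?thesis by blast
qed simp

lemma reachable_from_parent_marker_descendant:
  assumes M: "child_of E V M" and MS: "(child_of E)\<^sup>*\<^sup>* M S" and w: "w \<in> node_verts V E S"
  shows "(mtree_step (modtree V E))\<^sup>*\<^sup>* (Inr (M, True)) w"
  using MS w
proof (induction arbitrary: w rule: rtranclp_induct)
  case base
  then show ?case using reachable_from_parent_marker child_of_root[OF M] by blast
next
  case (step S0 S1)
  let ?step = "mtree_step (modtree V E)"
  have S0: "S0 \<in> dsets V E" "S0 \<subseteq> M"
    using step.hyps(1) dsets_child[OF M] by (auto simp: dsets_eq_descendants)
  have S1: "S1 \<in> dsets V E" "S1 \<noteq> V"
    using child_of_dsets[OF g S0(1) step.hyps(2)] S0(2) child_of_root[OF M] by auto
  have "?step\<^sup>*\<^sup>* (Inr (M, True)) (Inr (S1, False))"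
    using step.IH step.hyps(2) by (simp add: marker_in_node_verts_iff)
  moreover have "?step (Inr (S1, False)) (Inr (S1, True))"
    unfolding mtree_step_def mtedges_modtree_iff using S1 by blast
  ultimately have "?step\<^sup>*\<^sup>* (Inr (M, True)) (Inr (S1, True))"
    by (rule rtranclp.rtrancl_into_rtrancl)
  then show ?case using reachable_from_parent_marker[OF S1 step.prems] by (rule rtranclp_trans)
qed

lemma branch_reachable_from_anchor:
  assumes u: "u \<in> root_markers V E" and y: "y \<in> branch E u"
  shows "(mtree_step (modtree V E))\<^sup>*\<^sup>* (anchor u) y"
proof -
  obtain M where M: "u = Inr (M, False)" "child_of E V M" using u by (rule root_markersE)
  have "\<exists>S\<in>dsets V E. S \<subseteq> marker_set u \<and> y \<in> node_verts V E S"
    using y unfolding branch_iff[OF u] .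
  then obtain S where S: "S \<in> dsets V E" "S \<subseteq> M" "y \<in> node_verts V E S"
    using M(1) by auto
  have "S \<noteq> {}" using dsets_nonempty[OF g S(1)] S(2) child_of_root[OF M(2)] by auto
  then have "(child_of E)\<^sup>*\<^sup>* M S"
    using descendant_iff_subset[OF g child_of_root(4)[OF M(2)] S(1)] S(2) by blast
  then show ?thesis using reachable_from_parent_marker_descendant[OF M(2) _ S(3)] M(1) by simp
qed

lemma reachable_from_anchor:
  "u \<in> root_markers V E \<Longrightarrow> {y. (mtree_step (modtree V E))\<^sup>*\<^sup>* (anchor u) y} = branch E u"
  using reachable_from_anchor_subset branch_reachable_from_anchor by blast

end

context
  fixes V :: "'a set" and E :: "'a \<Rightarrow> 'a \<Rightarrow> bool" and \<phi> :: "'a mvert \<Rightarrow> 'a mvert"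
  assumes g: "fin_graph V E" and \<phi>: "mt_isom (modtree V E) (modtree V E) \<phi>"
begin

lemma aut_root_node_iff:
  "x \<in> mverts (modtree V E) \<Longrightarrow> \<phi> x \<in> root_node V E \<longleftrightarrow> x \<in> root_node V E"
  using mt_isom_root_node_vertex[OF wf_modtree[OF g] wf_modtree[OF g] \<phi>]
  unfolding root_node_def root_node_vertex_modtree[OF g] .

lemma aut_bij_root_node: "bij_betw \<phi> (root_node V E) (root_node V E)"
proof (rule bij_betw_subset)
  show "bij_betw \<phi> (mverts (modtree V E)) (mverts (modtree V E))"
    using \<phi> unfolding mt_isom_def by blast
  show "root_node V E \<subseteq> mverts (modtree V E)" by (rule root_node_subset[of V E])
  show "\<phi> ` root_node V E = root_node V E"
  proof
    show "\<phi> ` root_node V E \<subseteq> root_node V E"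
      using aut_root_node_iff root_node_subset[of V E] by blast
    show "root_node V E \<subseteq> \<phi> ` root_node V E"
    proof
      fix y assume y: "y \<in> root_node V E"
      then obtain x where "x \<in> mverts (modtree V E)" "y = \<phi> x"
        using \<phi> root_node_subset[of V E] unfolding mt_isom_def bij_betw_def by blast
      then show "y \<in> \<phi> ` root_node V E" using aut_root_node_iff y by blast
    qed
  qed
qed

lemma aut_normal_iff: "x \<in> mverts (modtree V E) \<Longrightarrow> \<phi> x \<in> Inl ` V \<longleftrightarrow> x \<in> Inl ` V"
  using \<phi> unfolding mt_isom_def mnormal_modtree by blast

lemma aut_root_markers: "u \<in> root_markers V E \<Longrightarrow> \<phi> u \<in> root_markers V E"
  using aut_root_node_iff aut_normal_iff root_node_subset[of V E]
  unfolding root_markers_iff_root_node[of _ V E] by blast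

lemma aut_anchor:
  assumes u: "u \<in> root_markers V E"
  shows "\<phi> (anchor u) = anchor (\<phi> u)"
proof -
  have "(u, anchor u) \<in> mtedges (modtree V E)"
    using u unfolding mtedges_modtree_root[OF g] by blast
  moreover have "u \<in> mverts (modtree V E)" "anchor u \<in> mverts (modtree V E)"
    using root_markers_subset[of V E] root_node_subset[of V E] u
      branch_subset[OF g u] anchor_in_branch by blast+
  ultimately have "(\<phi> u, \<phi> (anchor u)) \<in> mtedges (modtree V E)"
    using \<phi> unfolding mt_isom_def by blast
  moreover have "\<phi> u \<notin> mverts (subtree E u')" if "u' \<in> root_markers V E" for u'
    using root_node_disjoint_branch[OF g that] subtree_subset_branch aut_root_node_iff
      root_markers_subset[of V E] root_node_subset[of V E] u by blast
  ultimately show ?thesis unfolding mtedges_modtree_root[OF g] by blast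
qed

text \<open>Branches are the sets reachable from the anchors, so the automorphism permutes them.\<close>
lemma aut_branch:
  assumes u: "u \<in> root_markers V E"
  shows "\<phi> ` branch E u = branch E (\<phi> u)"
proof -
  have "anchor u \<in> mverts (modtree V E)" using branch_subset[OF g u] anchor_in_branch by blast
  then have "\<phi> ` {y. (mtree_step (modtree V E))\<^sup>*\<^sup>* (anchor u) y} =
      {y. (mtree_step (modtree V E))\<^sup>*\<^sup>* (\<phi> (anchor u)) y}"
    by (rule mt_isom_reachable[OF wf_modtree[OF g] wf_modtree[OF g] \<phi>])
  then show ?thesis
    using reachable_from_anchor[OF g u] reachable_from_anchor[OF g aut_root_markers[OF u]]
    by (simp add: aut_anchor[OF u])
qed

lemma aut_subtree:
  assumes u: "u \<in> root_markers V E"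
  shows "\<phi> ` mverts (subtree E u) = mverts (subtree E (\<phi> u))"
proof -
  have "mverts (subtree E w) = branch E w - {anchor w}" if "w \<in> root_markers V E" for w
    using anchor_notin_subtree[OF g that] unfolding branch_def by blast
  moreover have "\<phi> ` (branch E u - {anchor u}) = \<phi> ` branch E u - {\<phi> (anchor u)}"
    using mt_isom_inj_on[OF \<phi>] branch_subset[OF g u] anchor_in_branch by (blast dest: inj_onD)
  ultimately show ?thesis
    using aut_branch[OF u] aut_anchor[OF u] u aut_root_markers[OF u] by simp
qed

lemma aut_subtree_isom:
  assumes u: "u \<in> root_markers V E"
  shows "mt_isom (subtree E u) (subtree E (\<phi> u)) \<phi>"
  unfolding mt_isom_def
proof (intro conjI ballI)
  have u': "\<phi> u \<in> root_markers V E" using aut_root_markers[OF u] .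
  have sub: "mverts (subtree E u) \<subseteq> mverts (modtree V E)"
    using branch_subset[OF g u] subtree_subset_branch by blast
  show "bij_betw \<phi> (mverts (subtree E u)) (mverts (subtree E (\<phi> u)))"
    using aut_subtree[OF u] mt_isom_inj_on[OF \<phi>] sub unfolding bij_betw_def by (blast intro: inj_on_subset)
  fix x y assume x: "x \<in> mverts (subtree E u)" and y: "y \<in> mverts (subtree E u)"
  have fx: "\<phi> x \<in> mverts (subtree E (\<phi> u))" and fy: "\<phi> y \<in> mverts (subtree E (\<phi> u))"
    using aut_subtree[OF u] x y by blast+
  show "x \<in> mnormal (subtree E u) \<longleftrightarrow> \<phi> x \<in> mnormal (subtree E (\<phi> u))"
    using mnormal_subtree[OF g u x] mnormal_subtree[OF g u' fx] \<phi> sub x unfolding mt_isom_def by blast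
  show "(x, y) \<in> mnedges (subtree E u) \<longleftrightarrow> (\<phi> x, \<phi> y) \<in> mnedges (subtree E (\<phi> u))"
    using mnedges_subtree[OF g u x y] mnedges_subtree[OF g u' fx fy] \<phi> sub x y
    unfolding mt_isom_def by blast
  show "(x, y) \<in> mtedges (subtree E u) \<longleftrightarrow> (\<phi> x, \<phi> y) \<in> mtedges (subtree E (\<phi> u))"
    using mtedges_subtree[OF g u x y] mtedges_subtree[OF g u' fx fy] \<phi> sub x y
    unfolding mt_isom_def by blast
qed

end

context
  fixes V :: "'a set" and E :: "'a \<Rightarrow> 'a \<Rightarrow> bool" and f :: "'a mvert \<Rightarrow> 'a mvert"
  assumes g: "fin_graph V E"
    and f_root_node: "bij_betw f (root_node V E) (root_node V E)"
    and f_normal: "\<forall>x\<in>root_node V E. x \<in> Inl ` V \<longleftrightarrow> f x \<in> Inl ` V"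
    and f_mnedges: "\<forall>x\<in>root_node V E. \<forall>y\<in>root_node V E.
       (x, y) \<in> mnedges (modtree V E) \<longleftrightarrow> (f x, f y) \<in> mnedges (modtree V E)"
    and f_anchor: "\<forall>u\<in>root_markers V E. f (anchor u) = anchor (f u)"
    and f_subtree: "\<forall>u\<in>root_markers V E. mt_isom (subtree E u) (subtree E (f u)) f"
begin

lemma glue_root_node: "x \<in> root_node V E \<Longrightarrow> f x \<in> root_node V E"
  using f_root_node bij_betwE by blast

lemma glue_normal_iff: "x \<in> root_node V E \<Longrightarrow> f x \<in> Inl ` V \<longleftrightarrow> x \<in> Inl ` V"
  using f_normal by blast

lemma glue_root_markers:
  assumes "u \<in> root_markers V E"
  shows "f u \<in> root_markers V E"
proof -
  have "u \<in> root_node V E" "u \<notin> Inl ` V"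
    using assms unfolding root_markers_iff_root_node[of _ V E] by auto
  then show ?thesis
    unfolding root_markers_iff_root_node[of _ V E] by (simp add: glue_root_node glue_normal_iff)
qed

lemma glue_image_root_markers: "f ` root_markers V E = root_markers V E"
proof
  show "f ` root_markers V E \<subseteq> root_markers V E" using glue_root_markers by blast
  show "root_markers V E \<subseteq> f ` root_markers V E"
  proof
    fix w assume "w \<in> root_markers V E"
    then have w: "w \<in> root_node V E" "w \<notin> Inl ` V"
      unfolding root_markers_iff_root_node[of _ V E] by auto
    then obtain u where u: "u \<in> root_node V E" "w = f u"
      using f_root_node unfolding bij_betw_def by blast
    then have "u \<in> root_markers V E"
      using w unfolding root_markers_iff_root_node[of _ V E] by (simp add: glue_normal_iff)
    then show "w \<in> f ` root_markers V E" using u(2) by blast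
  qed
qed

lemma glue_inj_root_markers:
  assumes "u \<in> root_markers V E" "u' \<in> root_markers V E" "f u = f u'"
  shows "u = u'"
proof -
  have "inj_on f (root_node V E)" using f_root_node unfolding bij_betw_def by blast
  then show ?thesis using assms root_markers_subset[of V E] by (meson inj_onD subsetD)
qed

lemma glue_subtree: "u \<in> root_markers V E \<Longrightarrow> f ` mverts (subtree E u) = mverts (subtree E (f u))"
  using f_subtree unfolding mt_isom_def bij_betw_def by blast

lemma glue_branch:
  assumes u: "u \<in> root_markers V E"
  shows "f ` branch E u = branch E (f u)" "inj_on f (branch E u)"
proof -
  have inj: "inj_on f (mverts (subtree E u))" using f_subtree u unfolding mt_isom_def bij_betw_def by blast
  have "anchor (f u) \<notin> mverts (subtree E (f u))"
    using anchor_notin_subtree[OF g glue_root_markers[OF u]] .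
  then show "inj_on f (branch E u)"
    using inj glue_subtree[OF u] f_anchor u unfolding branch_def by auto
  show "f ` branch E u = branch E (f u)"
    using glue_subtree[OF u] f_anchor u unfolding branch_def by simp
qed

lemma glue_in_branch: "u \<in> root_markers V E \<Longrightarrow> x \<in> branch E u \<Longrightarrow> f x \<in> branch E (f u)"
  using glue_branch(1) by blast

lemma glue_root_node_preimage:
  assumes x: "x \<in> mverts (modtree V E)" and fx: "f x \<in> root_node V E"
  shows "x \<in> root_node V E"
  using x
proof (cases rule: mverts_modtree_cases[OF g, consumes 1])
  case (2 u)
  then show ?thesis
    using glue_in_branch root_node_disjoint_branch[OF g glue_root_markers] fx by blast
qed

lemma glue_subtree_preimage:
  assumes x: "x \<in> mverts (modtree V E)" and w: "w \<in> root_markers V E"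
    and fx: "f x \<in> mverts (subtree E w)"
  obtains u where "u \<in> root_markers V E" "w = f u" "x \<in> mverts (subtree E u)"
proof -
  have "x \<notin> root_node V E"
    using fx glue_root_node root_node_disjoint_branch[OF g w] subtree_subset_branch by blast
  then obtain u where u: "u \<in> root_markers V E" "x \<in> branch E u"
    using mverts_modtree_cases[OF g x] by blast
  have "w = f u"
    using branch_disjoint[OF g w glue_root_markers[OF u(1)]] fx subtree_subset_branch
      glue_in_branch[OF u] by blast
  moreover have "x \<noteq> anchor u"
    using fx f_anchor u anchor_notin_subtree[OF g w] \<open>w = f u\<close> by auto
  ultimately show thesis using that u unfolding branch_def by blast
qed

lemma glue_bij: "bij_betw f (mverts (modtree V E)) (mverts (modtree V E))"
proof -
  let ?T = "mverts (modtree V E)"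
  have T_eq: "?T = root_node V E \<union> (\<Union>u\<in>root_markers V E. branch E u)"
    using root_node_subset[of V E] branch_subset[OF g] by (blast elim: mverts_modtree_cases[OF g, consumes 1])
  have "f ` ?T = root_node V E \<union> (\<Union>u\<in>root_markers V E. branch E (f u))"
    unfolding T_eq image_Un image_UN using f_root_node glue_branch(1)
    by (simp add: bij_betw_def)
  also have "\<dots> = ?T"
    unfolding T_eq using glue_image_root_markers by (metis image_image UN_extend_simps(10))
  finally have image: "f ` ?T = ?T" .
  have "x = y" if x: "x \<in> ?T" and y: "y \<in> ?T" and eq: "f x = f y" for x y
    using x
  proof (cases rule: mverts_modtree_cases[OF g, consumes 1])
    case 1
    then have "y \<in> root_node V E" using glue_root_node_preimage[OF y] glue_root_node eq by metis
    then show ?thesis using 1 f_root_node eq unfolding bij_betw_def inj_on_def by blast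
  next
    case (2 u)
    have "y \<notin> root_node V E"
      using glue_root_node eq glue_in_branch[OF 2] root_node_disjoint_branch[OF g glue_root_markers[OF 2(1)]]
      by metis
    then obtain u' where u': "u' \<in> root_markers V E" "y \<in> branch E u'"
      using mverts_modtree_cases[OF g y] by blast
    have "f u = f u'"
      using branch_disjoint[OF g glue_root_markers[OF 2(1)] glue_root_markers[OF u'(1)]]
        glue_in_branch[OF 2] glue_in_branch[OF u'] eq by metis
    then have "u = u'" using glue_inj_root_markers 2(1) u'(1) by blast
    then show ?thesis using glue_branch(2)[OF 2(1)] 2(2) u'(2) eq unfolding inj_on_def by blast
  qed
  then show ?thesis unfolding bij_betw_def inj_on_def using image by blast
qed

lemma glue_mnormal:
  assumes x: "x \<in> mverts (modtree V E)"
  shows "x \<in> mnormal (modtree V E) \<longleftrightarrow> f x \<in> mnormal (modtree V E)"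
  using x
proof (cases rule: mverts_modtree_cases[OF g, consumes 1])
  case 1 then show ?thesis unfolding mnormal_modtree by (simp add: glue_normal_iff)
next
  case (2 u)
  note fu = glue_root_markers[OF 2(1)]
  from 2(2) show ?thesis
  proof (cases rule: branch_cases)
    case 1 then show ?thesis using f_anchor 2(1) anchor_not_normal unfolding mnormal_modtree by metis
  next
    case sub: 2
    have "f x \<in> mverts (subtree E (f u))" using glue_subtree[OF 2(1)] sub(1) by blast
    then show ?thesis
      using mnormal_subtree[OF g 2(1) sub(1)] mnormal_subtree[OF g fu] f_subtree 2(1) sub(1)
      unfolding mt_isom_def by blast
  qed
qed

lemma glue_mnedges_branch:
  assumes u: "u \<in> root_markers V E" and x: "x \<in> branch E u" and y: "y \<in> branch E u"
  shows "(x, y) \<in> mnedges (modtree V E) \<longleftrightarrow> (f x, f y) \<in> mnedges (modtree V E)"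
proof -
  note fu = glue_root_markers[OF u]
  have iso: "mt_isom (subtree E u) (subtree E (f u)) f" using f_subtree u by blast
  note root_iff = mt_isom_root_node_vertex[OF wf_modtree[OF fin_graph_root_marker[OF g u]]
      wf_modtree[OF fin_graph_root_marker[OF g fu]], folded subtree_def, OF iso]
  have in_sub: "f z \<in> mverts (subtree E (f u))" if "z \<in> mverts (subtree E u)" for z
    using glue_subtree[OF u] that by blast
  from x y consider "x = anchor u" "y = anchor u"
    | "x = anchor u" "y \<in> mverts (subtree E u)" | "x \<in> mverts (subtree E u)" "y = anchor u"
    | "x \<in> mverts (subtree E u)" "y \<in> mverts (subtree E u)"
    unfolding branch_def by blast
  then show ?thesis
  proof cases
    case 1 then show ?thesis using anchor_no_loop[OF g] f_anchor u by simp
  next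
    case 2 then show ?thesis
      using mnedges_anchor(1)[OF g u] mnedges_anchor(1)[OF g fu in_sub] root_iff f_anchor u by simp
  next
    case 3 then show ?thesis
      using mnedges_anchor(2)[OF g u] mnedges_anchor(2)[OF g fu in_sub] root_iff f_anchor u by simp
  next
    case 4 then show ?thesis
      using mnedges_subtree[OF g u] mnedges_subtree[OF g fu in_sub in_sub] iso
      unfolding mt_isom_def by blast
  qed
qed

lemma glue_mnedges:
  assumes x: "x \<in> mverts (modtree V E)" and y: "y \<in> mverts (modtree V E)"
  shows "(x, y) \<in> mnedges (modtree V E) \<longleftrightarrow> (f x, f y) \<in> mnedges (modtree V E)"
proof -
  have outside: "z \<notin> root_node V E \<and> f z \<notin> root_node V E"
    if "z \<in> branch E u" "u \<in> root_markers V E" for z u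
    using that root_node_disjoint_branch[OF g] glue_in_branch glue_root_markers by blast
  consider "x \<in> root_node V E" "y \<in> root_node V E"
    | "x \<in> root_node V E \<and> y \<notin> root_node V E \<and> f y \<notin> root_node V E
      \<or> y \<in> root_node V E \<and> x \<notin> root_node V E \<and> f x \<notin> root_node V E"
    | u u' where "u \<in> root_markers V E" "x \<in> branch E u" "u' \<in> root_markers V E" "y \<in> branch E u'"
    using mverts_modtree_cases[OF g x] mverts_modtree_cases[OF g y] outside by metis
  then show ?thesis
  proof cases
    case 1 then show ?thesis using f_mnedges by blast
  next
    case 2 then show ?thesis using mnedges_root_node_other[OF g] glue_root_node by metis
  next
    case (3 u u')
    show ?thesis
    proof (cases "u = u'")
      case True then show ?thesis using glue_mnedges_branch 3 by blast
    next
      case False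
      then have "f u \<noteq> f u'" using glue_inj_root_markers 3(1,3) by blast
      then show ?thesis
        using mnedges_branch_other[OF g 3(1,3) False 3(2,4)]
          mnedges_branch_other[OF g glue_root_markers[OF 3(1)] glue_root_markers[OF 3(3)]
            _ glue_in_branch[OF 3(1,2)] glue_in_branch[OF 3(3,4)]] by blast
    qed
  qed
qed

lemma glue_mtedges:
  assumes x: "x \<in> mverts (modtree V E)" and y: "y \<in> mverts (modtree V E)"
  shows "(x, y) \<in> mtedges (modtree V E) \<longleftrightarrow> (f x, f y) \<in> mtedges (modtree V E)"
proof -
  have to_anchor: "x \<in> root_markers V E \<and> y = anchor x \<longleftrightarrow>
      f x \<in> root_markers V E \<and> f y = anchor (f x)"
  proof
    assume fx: "f x \<in> root_markers V E \<and> f y = anchor (f x)"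
    have "x \<in> root_node V E"
      using glue_root_node_preimage[OF x] fx root_markers_subset[of V E] by blast
    then have xR: "x \<in> root_markers V E"
      using fx unfolding root_markers_iff_root_node[of _ V E] by (simp add: glue_normal_iff)
    have "anchor x \<in> mverts (modtree V E)" using branch_subset[OF g xR] anchor_in_branch by blast
    then have "y = anchor x"
      using fx f_anchor xR glue_bij y unfolding bij_betw_def inj_on_def by metis
    then show "x \<in> root_markers V E \<and> y = anchor x" using xR by blast
  qed (use glue_root_markers f_anchor in auto)
  have in_subtree: "(\<exists>u\<in>root_markers V E. x \<in> mverts (subtree E u) \<and> y \<in> mverts (subtree E u) \<and>
        (x, y) \<in> mtedges (subtree E u)) \<longleftrightarrow>
      (\<exists>w\<in>root_markers V E. f x \<in> mverts (subtree E w) \<and> f y \<in> mverts (subtree E w) \<and>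
        (f x, f y) \<in> mtedges (subtree E w))"
  proof
    assume "\<exists>w\<in>root_markers V E. f x \<in> mverts (subtree E w) \<and> f y \<in> mverts (subtree E w) \<and>
        (f x, f y) \<in> mtedges (subtree E w)"
    then obtain w where w: "w \<in> root_markers V E" "f x \<in> mverts (subtree E w)"
      "f y \<in> mverts (subtree E w)" "(f x, f y) \<in> mtedges (subtree E w)" by blast
    obtain u where u: "u \<in> root_markers V E" "w = f u" "x \<in> mverts (subtree E u)"
      using x w(1,2) by (rule glue_subtree_preimage)
    obtain u' where u': "u' \<in> root_markers V E" "w = f u'" "y \<in> mverts (subtree E u')"
      using y w(1,3) by (rule glue_subtree_preimage)
    have "u' = u" using glue_inj_root_markers u u' by metis
    then show "\<exists>u\<in>root_markers V E. x \<in> mverts (subtree E u) \<and> y \<in> mverts (subtree E u) \<and>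
        (x, y) \<in> mtedges (subtree E u)"
      using u u' w(4) f_subtree unfolding mt_isom_def by blast
  qed (use glue_subtree glue_root_markers f_subtree in \<open>unfold mt_isom_def, blast\<close>)
  show ?thesis unfolding mtedges_modtree_root[OF g] using to_anchor in_subtree by blast
qed

lemma glue_isom: "mt_isom (modtree V E) (modtree V E) f"
  unfolding mt_isom_def using glue_bij glue_mnormal glue_mnedges glue_mtedges by blast

end

definition identify :: "'a set \<Rightarrow> ('a \<Rightarrow> 'a \<Rightarrow> bool) \<Rightarrow> 'a mvert \<Rightarrow> 'a mvert \<Rightarrow> 'a mvert \<Rightarrow> 'a mvert" where
  "identify V E u w = rep_iso_inv V E w \<circ> rep_iso V E u"

lemma transport_eq_identify:
  "transport V E u w f = restrict (identify V E u w \<circ> f \<circ> identify V E w u) (mverts (subtree E w))"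
  unfolding transport_def identify_def by (simp add: comp_assoc)

lemma rep_marker_isomorphic:
  assumes "u \<in> root_markers V E"
  shows "mt_isomorphic (subtree E u) (subtree E (rep_marker V E u))"
  using someI[of "\<lambda>w. w \<in> root_markers V E \<and> mt_isomorphic (subtree E u) (subtree E w)" u]
    assms mt_isomorphic_refl unfolding rep_marker_def by blast

lemma rep_marker_eq:
  assumes "mt_isomorphic (subtree E u) (subtree E w)"
  shows "rep_marker V E u = rep_marker V E w"
proof -
  have "(\<lambda>x. x \<in> root_markers V E \<and> mt_isomorphic (subtree E u) (subtree E x)) =
      (\<lambda>x. x \<in> root_markers V E \<and> mt_isomorphic (subtree E w) (subtree E x))"
    using assms mt_isomorphic_sym mt_isomorphic_trans by blast
  then show ?thesis unfolding rep_marker_def by simp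
qed

lemma mt_isom_rep_iso:
  assumes "u \<in> root_markers V E"
  shows "mt_isom (subtree E u) (subtree E (rep_marker V E u)) (rep_iso V E u)"
proof -
  obtain f where "mt_isom (subtree E u) (subtree E (rep_marker V E u)) f"
    using rep_marker_isomorphic[OF assms] unfolding mt_isomorphic_def by blast
  then have "\<exists>f. f \<in> extensional (mverts (subtree E u)) \<and>
      mt_isom (subtree E u) (subtree E (rep_marker V E u)) f"
    using mt_isom_restrict by (intro exI[of _ "restrict f (mverts (subtree E u))"]) simp
  then have "rep_iso V E u \<in> extensional (mverts (subtree E u)) \<and>
      mt_isom (subtree E u) (subtree E (rep_marker V E u)) (rep_iso V E u)"
    unfolding rep_iso_def by (rule someI_ex)
  then show ?thesis by blast
qed

lemma bij_betw_rep_iso: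
  assumes "u \<in> root_markers V E"
  shows "bij_betw (rep_iso V E u) (mverts (subtree E u)) (mverts (subtree E (rep_marker V E u)))"
  using mt_isom_rep_iso[OF assms] unfolding mt_isom_def by blast

lemma mt_isom_rep_iso_inv:
  "u \<in> root_markers V E \<Longrightarrow> mt_isom (subtree E (rep_marker V E u)) (subtree E u) (rep_iso_inv V E u)"
  unfolding rep_iso_inv_def by (rule mt_isom_restrict[OF mt_isom_inv_into[OF mt_isom_rep_iso]])

lemma rep_iso_inv_rep_iso:
  "u \<in> root_markers V E \<Longrightarrow> x \<in> mverts (subtree E u) \<Longrightarrow> rep_iso_inv V E u (rep_iso V E u x) = x"
  using bij_betw_rep_iso[of u V E] bij_betwE unfolding rep_iso_inv_def
  by (fastforce simp: bij_betw_def inv_into_f_f)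

lemma rep_iso_rep_iso_inv:
  "u \<in> root_markers V E \<Longrightarrow> y \<in> mverts (subtree E (rep_marker V E u)) \<Longrightarrow>
    rep_iso V E u (rep_iso_inv V E u y) = y"
  unfolding rep_iso_inv_def by (simp add: bij_betw_inv_into_right[OF bij_betw_rep_iso])

context
  fixes V :: "'a set" and E :: "'a \<Rightarrow> 'a \<Rightarrow> bool" and u w :: "'a mvert"
  assumes u: "u \<in> root_markers V E" and w: "w \<in> root_markers V E"
    and same_colour: "rep_marker V E u = rep_marker V E w"
begin

lemma mt_isom_identify: "mt_isom (subtree E u) (subtree E w) (identify V E u w)"
  unfolding identify_def using mt_isom_comp mt_isom_rep_iso[OF u] mt_isom_rep_iso_inv[OF w] same_colour by metis

lemma identify_mverts: "x \<in> mverts (subtree E u) \<Longrightarrow> identify V E u w x \<in> mverts (subtree E w)"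
  using mt_isom_mverts[OF mt_isom_identify] .

lemma identify_trans:
  assumes "rep_marker V E w = rep_marker V E v" and x: "x \<in> mverts (subtree E u)"
  shows "identify V E w v (identify V E u w x) = identify V E u v x"
proof -
  have "rep_iso V E u x \<in> mverts (subtree E (rep_marker V E w))"
    using mt_isom_mverts[OF mt_isom_rep_iso[OF u] x] same_colour by simp
  then show ?thesis unfolding identify_def using rep_iso_rep_iso_inv[OF w] by simp
qed

end

lemma identify_self: "u \<in> root_markers V E \<Longrightarrow> x \<in> mverts (subtree E u) \<Longrightarrow> identify V E u u x = x"
  unfolding identify_def using rep_iso_inv_rep_iso by simp

lemma aut_group_carrier: "f \<in> carrier (aut_group T) \<longleftrightarrow> f \<in> extensional (mverts T) \<and> mt_isom T T f"
  unfolding aut_group_def by simp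

lemma aut_group_mult: "f \<otimes>\<^bsub>aut_group T\<^esub> h = compose (mverts T) f h"
  unfolding aut_group_def by simp

lemma semidirect_aut_carrier: "(a, p) \<in> carrier (semidirect_aut V E) \<longleftrightarrow>
    a \<in> (\<Pi>\<^sub>E v\<in>root_markers V E. carrier (aut_group (subtree E v))) \<and> p \<in> aut_root_node V E"
  unfolding semidirect_aut_def by simp

lemma aut_root_nodeD:
  assumes "p \<in> aut_root_node V E"
  shows "p \<in> extensional (root_node V E)" "bij_betw p (root_node V E) (root_node V E)"
    and "\<forall>x\<in>root_node V E. x \<in> Inl ` V \<longleftrightarrow> p x \<in> Inl ` V"
    and "\<forall>x\<in>root_node V E. \<forall>y\<in>root_node V E.
      (x, y) \<in> mnedges (modtree V E) \<longleftrightarrow> (p x, p y) \<in> mnedges (modtree V E)"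
    and "\<forall>v\<in>root_markers V E. mt_isomorphic (subtree E v) (subtree E (p v))"
  using assms unfolding aut_root_node_def mnormal_modtree mem_Collect_eq by blast+

definition branch_owner :: "'a set \<Rightarrow> ('a \<Rightarrow> 'a \<Rightarrow> bool) \<Rightarrow> 'a mvert \<Rightarrow> 'a mvert" where
  "branch_owner V E x = (SOME u. u \<in> root_markers V E \<and> x \<in> branch E u)"

definition glue_aut :: "'a set \<Rightarrow> ('a \<Rightarrow> 'a \<Rightarrow> bool) \<Rightarrow> ('a mvert \<Rightarrow> 'a mvert \<Rightarrow> 'a mvert)
      \<Rightarrow> ('a mvert \<Rightarrow> 'a mvert) \<Rightarrow> 'a mvert \<Rightarrow> 'a mvert" where
  "glue_aut V E a p x =
     (if x \<in> root_node V E then p x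
      else if x \<in> mverts (modtree V E) then
        (let u = branch_owner V E x in
         if x = anchor u then anchor (p u) else a (p u) (identify V E u (p u) x))
      else undefined)"

text \<open>The component at w pulls phi back along the identification of T_w with the subtree
  that phi maps onto T_w.\<close>
definition split_aut :: "'a set \<Rightarrow> ('a \<Rightarrow> 'a \<Rightarrow> bool) \<Rightarrow> ('a mvert \<Rightarrow> 'a mvert) \<Rightarrow>
     ('a mvert \<Rightarrow> 'a mvert \<Rightarrow> 'a mvert) \<times> ('a mvert \<Rightarrow> 'a mvert)" where
  "split_aut V E \<phi> =
     ((\<lambda>w\<in>root_markers V E.
        restrict (\<phi> \<circ> identify V E w (inv_into (root_node V E) (restrict \<phi> (root_node V E)) w))
          (mverts (subtree E w))),
      restrict \<phi> (root_node V E))"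

context
  fixes V :: "'a set" and E :: "'a \<Rightarrow> 'a \<Rightarrow> bool"
  assumes g: "fin_graph V E"
begin

lemma branch_owner_eq: "u \<in> root_markers V E \<Longrightarrow> x \<in> branch E u \<Longrightarrow> branch_owner V E x = u"
  unfolding branch_owner_def using branch_disjoint[OF g] by blast

lemma glue_aut_root_node: "x \<in> root_node V E \<Longrightarrow> glue_aut V E a p x = p x"
  unfolding glue_aut_def by simp

lemma glue_aut_anchor:
  assumes u: "u \<in> root_markers V E"
  shows "glue_aut V E a p (anchor u) = anchor (p u)"
proof -
  have "anchor u \<notin> root_node V E" "anchor u \<in> mverts (modtree V E)"
    using root_node_disjoint_branch[OF g u] branch_subset[OF g u] anchor_in_branch by blast+
  then show ?thesis
    unfolding glue_aut_def Let_def branch_owner_eq[OF u anchor_in_branch] by simp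
qed

lemma glue_aut_subtree:
  assumes u: "u \<in> root_markers V E" and x: "x \<in> mverts (subtree E u)"
  shows "glue_aut V E a p x = a (p u) (identify V E u (p u) x)"
proof -
  have "x \<in> branch E u" using x subtree_subset_branch by blast
  moreover have "x \<noteq> anchor u" using x anchor_notin_subtree[OF g u] by blast
  ultimately show ?thesis
    using root_node_disjoint_branch[OF g u] branch_subset[OF g u] branch_owner_eq[OF u]
    unfolding glue_aut_def Let_def by auto
qed

lemma glue_aut_extensional: "glue_aut V E a p \<in> extensional (mverts (modtree V E))"
  using root_node_subset[of V E] unfolding glue_aut_def extensional_def by auto

lemma aut_root_node_root_markers:
  assumes p: "p \<in> aut_root_node V E" and u: "u \<in> root_markers V E"
  shows "p u \<in> root_markers V E"
proof -
  have "u \<in> root_node V E" "u \<notin> Inl ` V" using u unfolding root_markers_iff_root_node[of _ V E] by auto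
  then show ?thesis
    using bij_betwE[OF aut_root_nodeD(2)[OF p]] aut_root_nodeD(3)[OF p]
    unfolding root_markers_iff_root_node[of _ V E] by blast
qed

lemma aut_root_node_rep_marker:
  assumes "p \<in> aut_root_node V E" "u \<in> root_markers V E"
  shows "rep_marker V E (p u) = rep_marker V E u"
proof -
  have "mt_isomorphic (subtree E u) (subtree E (p u))" using aut_root_nodeD(5) assms by blast
  then show ?thesis using rep_marker_eq by metis
qed

lemma aut_root_node_inv_into:
  assumes p: "p \<in> aut_root_node V E" and w: "w \<in> root_markers V E"
  shows "inv_into (root_node V E) p w \<in> root_markers V E" "p (inv_into (root_node V E) p w) = w"
proof -
  have w': "w \<in> p ` root_node V E" "w \<notin> Inl ` V"
    using w aut_root_nodeD(2)[OF p] unfolding root_markers_iff_root_node[of _ V E] bij_betw_def by auto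
  show "p (inv_into (root_node V E) p w) = w" using f_inv_into_f[OF w'(1)] .
  moreover have "inv_into (root_node V E) p w \<in> root_node V E" using inv_into_into[OF w'(1)] .
  moreover note bspec[OF aut_root_nodeD(3)[OF p] this]
  ultimately show "inv_into (root_node V E) p w \<in> root_markers V E"
    using w'(2) unfolding root_markers_iff_root_node[of _ V E] by simp
qed

lemma glue_aut_in_carrier:
  assumes ap: "(a, p) \<in> carrier (semidirect_aut V E)"
  shows "glue_aut V E a p \<in> carrier (aut_group (modtree V E))"
proof -
  have a: "a \<in> (\<Pi>\<^sub>E v\<in>root_markers V E. carrier (aut_group (subtree E v)))"
    and p: "p \<in> aut_root_node V E"
    using ap unfolding semidirect_aut_carrier by auto
  let ?f = "glue_aut V E a p"
  have "mt_isom (modtree V E) (modtree V E) ?f"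
  proof (rule glue_isom[OF g])
    show "bij_betw ?f (root_node V E) (root_node V E)"
      using aut_root_nodeD(2)[OF p] bij_betw_cong[of "root_node V E" ?f p] glue_aut_root_node by simp
    show "\<forall>x\<in>root_node V E. x \<in> Inl ` V \<longleftrightarrow> ?f x \<in> Inl ` V"
      using aut_root_nodeD(3)[OF p] glue_aut_root_node by simp
    show "\<forall>x\<in>root_node V E. \<forall>y\<in>root_node V E.
      (x, y) \<in> mnedges (modtree V E) \<longleftrightarrow> (?f x, ?f y) \<in> mnedges (modtree V E)"
      using aut_root_nodeD(4)[OF p] glue_aut_root_node by simp
    show "\<forall>u\<in>root_markers V E. ?f (anchor u) = anchor (?f u)"
      using glue_aut_anchor glue_aut_root_node root_markers_subset[of V E] by auto
    show "\<forall>u\<in>root_markers V E. mt_isom (subtree E u) (subtree E (?f u)) ?f"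
    proof
      fix u assume u: "u \<in> root_markers V E"
      have pu: "p u \<in> root_markers V E" using aut_root_node_root_markers[OF p u] .
      have "mt_isom (subtree E (p u)) (subtree E (p u)) (a (p u))"
        using a pu by (simp add: aut_group_carrier PiE_iff)
      then have "mt_isom (subtree E u) (subtree E (p u)) (a (p u) \<circ> identify V E u (p u))"
        using mt_isom_comp[OF mt_isom_identify[OF u pu]] aut_root_node_rep_marker[OF p u] by simp
      then have "mt_isom (subtree E u) (subtree E (p u)) ?f"
        by (rule mt_isom_cong) (simp add: glue_aut_subtree[OF u])
      then show "mt_isom (subtree E u) (subtree E (?f u)) ?f"
        using glue_aut_root_node u root_markers_subset[of V E] by auto
    qed
  qed
  then show ?thesis using glue_aut_extensional aut_group_carrier by blast
qed

lemma aut_in_aut_root_node: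
  assumes \<phi>: "mt_isom (modtree V E) (modtree V E) \<phi>"
  shows "restrict \<phi> (root_node V E) \<in> aut_root_node V E"
  unfolding aut_root_node_def mem_Collect_eq
proof (intro conjI ballI)
  show "bij_betw (restrict \<phi> (root_node V E)) (root_node V E) (root_node V E)"
    using aut_bij_root_node[OF g \<phi>] bij_betw_cong[of "root_node V E" "restrict \<phi> (root_node V E)" \<phi>]
    by simp
  fix x assume x: "x \<in> root_node V E"
  have x': "x \<in> mverts (modtree V E)" using x root_node_subset[of V E] by blast
  show "x \<in> mnormal (modtree V E) \<longleftrightarrow> restrict \<phi> (root_node V E) x \<in> mnormal (modtree V E)"
    using \<phi> x x' unfolding mt_isom_def by simp
  fix y assume y: "y \<in> root_node V E"
  have y': "y \<in> mverts (modtree V E)" using y root_node_subset[of V E] by blast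
  show "(x, y) \<in> mnedges (modtree V E) \<longleftrightarrow>
      (restrict \<phi> (root_node V E) x, restrict \<phi> (root_node V E) y) \<in> mnedges (modtree V E)"
    using \<phi> x y x' y' unfolding mt_isom_def by simp
next
  fix v assume "v \<in> root_markers V E"
  moreover from this have "v \<in> root_node V E" using root_markers_subset[of V E] by blast
  ultimately show "mt_isomorphic (subtree E v) (subtree E (restrict \<phi> (root_node V E) v))"
    using aut_subtree_isom[OF g \<phi>] unfolding mt_isomorphic_def by auto
qed simp

lemma split_aut_in_carrier:
  assumes \<phi>: "\<phi> \<in> carrier (aut_group (modtree V E))"
  shows "split_aut V E \<phi> \<in> carrier (semidirect_aut V E)"
proof -
  have \<phi>_iso: "mt_isom (modtree V E) (modtree V E) \<phi>" using \<phi> aut_group_carrier by blast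
  let ?p = "restrict \<phi> (root_node V E)"
  have p: "?p \<in> aut_root_node V E" using aut_in_aut_root_node[OF \<phi>_iso] .
  have "restrict (\<phi> \<circ> identify V E w (inv_into (root_node V E) ?p w)) (mverts (subtree E w))
      \<in> carrier (aut_group (subtree E w))" if w: "w \<in> root_markers V E" for w
  proof -
    let ?u = "inv_into (root_node V E) ?p w"
    have u: "?u \<in> root_markers V E" "\<phi> ?u = w"
      using aut_root_node_inv_into[OF p w] root_markers_subset[of V E] by auto
    have iso: "mt_isom (subtree E ?u) (subtree E w) \<phi>"
      using aut_subtree_isom[OF g \<phi>_iso u(1)] u(2) by simp
    then have "rep_marker V E w = rep_marker V E ?u"
      using rep_marker_eq unfolding mt_isomorphic_def by metis
    then have "mt_isom (subtree E w) (subtree E w) (\<phi> \<circ> identify V E w ?u)"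
      using mt_isom_comp[OF mt_isom_identify[OF w u(1)] iso] by simp
    then show ?thesis using mt_isom_restrict aut_group_carrier by fastforce
  qed
  then show ?thesis unfolding split_aut_def semidirect_aut_carrier using p by auto
qed

lemma aut_rep_marker:
  assumes \<phi>: "mt_isom (modtree V E) (modtree V E) \<phi>" and u: "u \<in> root_markers V E"
  shows "rep_marker V E (\<phi> u) = rep_marker V E u"
  using rep_marker_eq aut_subtree_isom[OF g \<phi> u] unfolding mt_isomorphic_def by metis

lemma split_aut_fst:
  assumes \<phi>: "mt_isom (modtree V E) (modtree V E) \<phi>" and u: "u \<in> root_markers V E"
  shows "fst (split_aut V E \<phi>) (\<phi> u) =
    restrict (\<phi> \<circ> identify V E (\<phi> u) u) (mverts (subtree E (\<phi> u)))"
proof -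
  have uN: "u \<in> root_node V E" using u root_markers_subset[of V E] by blast
  have "inj_on (restrict \<phi> (root_node V E)) (root_node V E)"
    using aut_bij_root_node[OF g \<phi>] unfolding bij_betw_def inj_on_def by simp
  then have "inv_into (root_node V E) (restrict \<phi> (root_node V E)) (\<phi> u) = u"
    using inv_into_f_f[of "restrict \<phi> (root_node V E)" _ u] uN by simp
  then show ?thesis unfolding split_aut_def using aut_root_markers[OF g \<phi> u] by simp
qed

lemma split_aut_fst_identify:
  assumes \<phi>: "mt_isom (modtree V E) (modtree V E) \<phi>" and u: "u \<in> root_markers V E"
    and x: "x \<in> mverts (subtree E u)"
  shows "fst (split_aut V E \<phi>) (\<phi> u) (identify V E u (\<phi> u) x) = \<phi> x"
proof -
  have w: "\<phi> u \<in> root_markers V E" using aut_root_markers[OF g \<phi> u] .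
  have rep: "rep_marker V E u = rep_marker V E (\<phi> u)" using aut_rep_marker[OF \<phi> u] by simp
  have "identify V E u (\<phi> u) x \<in> mverts (subtree E (\<phi> u))" using identify_mverts[OF u w rep x] .
  then have "fst (split_aut V E \<phi>) (\<phi> u) (identify V E u (\<phi> u) x) =
      \<phi> (identify V E (\<phi> u) u (identify V E u (\<phi> u) x))"
    using split_aut_fst[OF \<phi> u] by simp
  also have "\<dots> = \<phi> x"
    using identify_trans[OF u w rep rep[symmetric] x] identify_self[OF u x] by simp
  finally show ?thesis .
qed

lemma root_action_marker:
  assumes p: "p \<in> aut_root_node V E" and u: "u \<in> root_markers V E"
  shows "root_action V E p b (p u) = transport V E u (p u) (b u)"
proof -
  have "inv_into (root_node V E) p (p u) = u"
    using aut_root_nodeD(2)[OF p] u root_markers_subset[of V E]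
    by (meson bij_betw_imp_inj_on inv_into_f_f subsetD)
  then show ?thesis
    unfolding root_action_def using aut_root_node_root_markers[OF p u] by simp
qed

lemma glue_aut_identify:
  assumes p: "p \<in> aut_root_node V E" and u: "u \<in> root_markers V E"
    and y: "y \<in> mverts (subtree E (p u))"
  shows "glue_aut V E a p (identify V E (p u) u y) = a (p u) y"
proof -
  have w: "p u \<in> root_markers V E" using aut_root_node_root_markers[OF p u] .
  have rep: "rep_marker V E (p u) = rep_marker V E u" using aut_root_node_rep_marker[OF p u] .
  have "identify V E (p u) u y \<in> mverts (subtree E u)" using identify_mverts[OF w u rep y] .
  then have "glue_aut V E a p (identify V E (p u) u y) =
      a (p u) (identify V E u (p u) (identify V E (p u) u y))"
    using glue_aut_subtree[OF u] by simp
  also have "\<dots> = a (p u) y"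
    using identify_trans[OF w u rep rep[symmetric] y] identify_self[OF w y] by simp
  finally show ?thesis .
qed

lemma split_glue_aut:
  assumes ap: "(a, p) \<in> carrier (semidirect_aut V E)"
  shows "split_aut V E (glue_aut V E a p) = (a, p)"
proof -
  have a: "a \<in> (\<Pi>\<^sub>E v\<in>root_markers V E. carrier (aut_group (subtree E v)))"
    and p: "p \<in> aut_root_node V E"
    using ap unfolding semidirect_aut_carrier by auto
  let ?f = "glue_aut V E a p"
  have f: "mt_isom (modtree V E) (modtree V E) ?f"
    using glue_aut_in_carrier[OF ap] aut_group_carrier by blast
  have root_part: "restrict ?f (root_node V E) = p"
    using aut_root_nodeD(1)[OF p] glue_aut_root_node by (auto simp: extensional_def)
  have "fst (split_aut V E ?f) w = a w" for w
  proof (cases "w \<in> root_markers V E")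
    case False then show ?thesis using a unfolding split_aut_def by (auto simp: PiE_def extensional_def)
  next
    case w: True
    obtain u where u: "u \<in> root_markers V E" "p u = w"
      using aut_root_node_inv_into[OF p w] by blast
    have fu: "?f u = w" using u glue_aut_root_node root_markers_subset[of V E] by auto
    have "restrict (?f \<circ> identify V E w u) (mverts (subtree E w)) y = a w y" for y
      using glue_aut_identify[OF p u(1), of y a] u(2) a w
      by (auto simp: PiE_iff aut_group_carrier extensional_def)
    then show ?thesis using split_aut_fst[OF f u(1)] fu by auto
  qed
  then have "fst (split_aut V E ?f) = a" by (rule ext)
  moreover have "snd (split_aut V E ?f) = p" using root_part unfolding split_aut_def by simp
  ultimately show ?thesis by (simp add: prod_eq_iff)
qed

lemma glue_split_aut:
  assumes \<phi>: "\<phi> \<in> carrier (aut_group (modtree V E))"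
  shows "case_prod (glue_aut V E) (split_aut V E \<phi>) = \<phi>"
proof
  have ext: "\<phi> \<in> extensional (mverts (modtree V E))" and iso: "mt_isom (modtree V E) (modtree V E) \<phi>"
    using \<phi> aut_group_carrier by auto
  define a where "a = fst (split_aut V E \<phi>)"
  let ?p = "restrict \<phi> (root_node V E)"
  have split: "split_aut V E \<phi> = (a, ?p)" unfolding a_def split_aut_def by simp
  fix x
  show "case_prod (glue_aut V E) (split_aut V E \<phi>) x = \<phi> x"
  proof (cases "x \<in> mverts (modtree V E)")
    case False
    then show ?thesis
      using ext glue_aut_extensional unfolding split by (auto simp: extensional_def)
  next
    case True
    have "glue_aut V E a ?p x = \<phi> x"
      using True
    proof (cases rule: mverts_modtree_cases[OF g, consumes 1])
      case 1 then show ?thesis by (simp add: glue_aut_root_node)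
    next
      case (2 u)
      have pu: "?p u = \<phi> u" using 2(1) root_markers_subset[of V E] by auto
      from 2(2) show ?thesis
      proof (cases rule: branch_cases)
        case 1
        then show ?thesis using glue_aut_anchor[OF 2(1)] aut_anchor[OF g iso 2(1)] pu by simp
      next
        case sub: 2
        then show ?thesis
          using glue_aut_subtree[OF 2(1) sub(1)] split_aut_fst_identify[OF iso 2(1) sub(1), folded a_def] pu
          by simp
      qed
    qed
    then show ?thesis unfolding split by simp
  qed
qed

lemma aut_root_markers_surj:
  assumes \<phi>: "mt_isom (modtree V E) (modtree V E) \<phi>" and v: "v \<in> root_markers V E"
  obtains u where "u \<in> root_markers V E" "\<phi> u = v"
  using aut_root_node_inv_into[OF aut_in_aut_root_node[OF \<phi>] v] root_markers_subset[of V E]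
  by (metis restrict_apply' subsetD)

text \<open>The cocycle law behind the multiplication of the semidirect product.\<close>
lemma split_aut_compose_identify:
  assumes \<phi>: "mt_isom (modtree V E) (modtree V E) \<phi>" and \<psi>: "mt_isom (modtree V E) (modtree V E) \<psi>"
    and u: "u \<in> root_markers V E" and x: "x \<in> mverts (subtree E u)"
  shows "fst (split_aut V E \<phi>) (\<phi> (\<psi> u))
      (transport V E (\<psi> u) (\<phi> (\<psi> u)) (fst (split_aut V E \<psi>) (\<psi> u)) (identify V E u (\<phi> (\<psi> u)) x))
    = \<phi> (\<psi> x)"
proof -
  let ?u' = "\<psi> u" and ?v = "\<phi> (\<psi> u)"
  have u': "?u' \<in> root_markers V E" and v: "?v \<in> root_markers V E"
    using aut_root_markers[OF g \<psi> u] aut_root_markers[OF g \<phi>] by auto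
  have rep_u: "rep_marker V E u = rep_marker V E ?u'" using aut_rep_marker[OF \<psi> u] by simp
  have rep_u': "rep_marker V E ?u' = rep_marker V E ?v" using aut_rep_marker[OF \<phi> u'] by simp
  have \<psi>x: "\<psi> x \<in> mverts (subtree E ?u')"
    using mt_isom_mverts[OF aut_subtree_isom[OF g \<psi> u] x] .
  have y: "identify V E u ?v x \<in> mverts (subtree E ?v)"
    using identify_mverts[OF u v _ x] rep_u rep_u' by simp
  have "identify V E ?v ?u' (identify V E u ?v x) = identify V E u ?u' x"
    using identify_trans[OF u v _ _ x] rep_u rep_u' by simp
  then have "transport V E ?u' ?v (fst (split_aut V E \<psi>) ?u') (identify V E u ?v x) =
      identify V E ?u' ?v (\<psi> x)"
    unfolding transport_eq_identify using y split_aut_fst_identify[OF \<psi> u x] by simp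
  then show ?thesis using split_aut_fst_identify[OF \<phi> u' \<psi>x] by simp
qed

lemma split_aut_compose_fst:
  assumes \<phi>: "mt_isom (modtree V E) (modtree V E) \<phi>" and \<psi>: "mt_isom (modtree V E) (modtree V E) \<psi>"
    and u: "u \<in> root_markers V E"
  shows "fst (split_aut V E (compose (mverts (modtree V E)) \<phi> \<psi>)) (\<phi> (\<psi> u)) =
    compose (mverts (subtree E (\<phi> (\<psi> u)))) (fst (split_aut V E \<phi>) (\<phi> (\<psi> u)))
      (transport V E (\<psi> u) (\<phi> (\<psi> u)) (fst (split_aut V E \<psi>) (\<psi> u)))"
proof -
  let ?\<chi> = "compose (mverts (modtree V E)) \<phi> \<psi>" and ?v = "\<phi> (\<psi> u)"
  have \<chi>: "mt_isom (modtree V E) (modtree V E) ?\<chi>"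
    by (rule mt_isom_cong[OF mt_isom_comp[OF \<psi> \<phi>]]) (simp add: compose_def)
  have \<chi>u: "?\<chi> u = ?v" using u root_markers_subset[of V E] root_node_subset[of V E] by (auto simp: compose_def)
  have v: "?v \<in> root_markers V E" using aut_root_markers[OF g \<phi> aut_root_markers[OF g \<psi> u]] .
  have rep: "rep_marker V E u = rep_marker V E ?v" using aut_rep_marker[OF \<chi> u] \<chi>u by simp
  have "fst (split_aut V E ?\<chi>) ?v y = fst (split_aut V E \<phi>) ?v
      (transport V E (\<psi> u) ?v (fst (split_aut V E \<psi>) (\<psi> u)) y)" if y: "y \<in> mverts (subtree E ?v)" for y
  proof -
    let ?x = "identify V E ?v u y"
    have x: "?x \<in> mverts (subtree E u)" using identify_mverts[OF v u rep[symmetric] y] .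
    have y_eq: "identify V E u ?v ?x = y"
      using identify_trans[OF v u rep[symmetric] rep y] identify_self[OF v y] by simp
    have "fst (split_aut V E ?\<chi>) ?v y = ?\<chi> ?x"
      using split_aut_fst_identify[OF \<chi> u x] \<chi>u y_eq by simp
    also have "\<dots> = \<phi> (\<psi> ?x)"
      using x subtree_subset_branch branch_subset[OF g u] by (auto simp: compose_def)
    finally show ?thesis using split_aut_compose_identify[OF \<phi> \<psi> u x] y_eq by simp
  qed
  moreover have "fst (split_aut V E ?\<chi>) ?v \<in> extensional (mverts (subtree E ?v))"
    using split_aut_fst[OF \<chi> u] \<chi>u by simp
  ultimately show ?thesis by (auto simp: compose_def extensional_def)
qed

lemma split_aut_mult:
  assumes \<phi>: "\<phi> \<in> carrier (aut_group (modtree V E))" and \<psi>: "\<psi> \<in> carrier (aut_group (modtree V E))"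
  shows "split_aut V E (\<phi> \<otimes>\<^bsub>aut_group (modtree V E)\<^esub> \<psi>) =
    split_aut V E \<phi> \<otimes>\<^bsub>semidirect_aut V E\<^esub> split_aut V E \<psi>"
proof -
  let ?T = "modtree V E" and ?N = "root_node V E"
  let ?\<chi> = "compose (mverts ?T) \<phi> \<psi>"
  have \<phi>_iso: "mt_isom ?T ?T \<phi>" and \<psi>_iso: "mt_isom ?T ?T \<psi>"
    using \<phi> \<psi> unfolding aut_group_carrier by auto
  define a b where "a = fst (split_aut V E \<phi>)" and "b = fst (split_aut V E \<psi>)"
  let ?p = "restrict \<phi> ?N" and ?q = "restrict \<psi> ?N"
  have split: "split_aut V E \<phi> = (a, ?p)" "split_aut V E \<psi> = (b, ?q)"
    unfolding a_def b_def split_aut_def by simp_all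
  have p: "?p \<in> aut_root_node V E" using aut_in_aut_root_node[OF \<phi>_iso] .
  have "fst (split_aut V E ?\<chi>) v = compose (mverts (subtree E v)) (a v) (root_action V E ?p b v)"
    if v: "v \<in> root_markers V E" for v
  proof -
    obtain u' where u': "u' \<in> root_markers V E" "\<phi> u' = v" using \<phi>_iso v by (rule aut_root_markers_surj)
    obtain u where u: "u \<in> root_markers V E" "\<psi> u = u'" using \<psi>_iso u'(1) by (rule aut_root_markers_surj)
    have "root_action V E ?p b v = transport V E u' v (b u')"
      using root_action_marker[OF p u'(1)] u' root_markers_subset[of V E] by auto
    then show ?thesis
      using split_aut_compose_fst[OF \<phi>_iso \<psi>_iso u(1), folded a_def b_def] u u' by simp
  qed
  then have "fst (split_aut V E ?\<chi>) =
      (\<lambda>v\<in>root_markers V E. compose (mverts (subtree E v)) (a v) (root_action V E ?p b v))"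
    unfolding split_aut_def by (auto simp: fun_eq_iff)
  moreover have "snd (split_aut V E ?\<chi>) = compose ?N ?p ?q"
    using aut_bij_root_node[OF g \<psi>_iso] root_node_subset[of V E]
    unfolding split_aut_def by (auto simp: compose_def fun_eq_iff bij_betwE)
  moreover have "split_aut V E \<phi> \<otimes>\<^bsub>semidirect_aut V E\<^esub> split_aut V E \<psi> =
      ((\<lambda>v\<in>root_markers V E. compose (mverts (subtree E v)) (a v) (root_action V E ?p b v)),
       compose ?N ?p ?q)"
    unfolding split semidirect_aut_def by (simp add: aut_group_mult)
  ultimately show ?thesis unfolding aut_group_mult by (simp add: prod_eq_iff)
qed

end

theorem mainTheorem3:
  fixes V :: "'a set" and E :: "'a \<Rightarrow> 'a \<Rightarrow> bool"
  assumes "fin_graph V E"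
  shows "aut_group (modtree V E) \<cong> semidirect_aut V E"
proof (intro is_isoI isoI)
  show "split_aut V E \<in> hom (aut_group (modtree V E)) (semidirect_aut V E)"
    by (rule homI) (use split_aut_in_carrier[OF assms] split_aut_mult[OF assms] in auto)
  show "bij_betw (split_aut V E) (carrier (aut_group (modtree V E))) (carrier (semidirect_aut V E))"
  proof (rule bij_betw_byWitness[where f' = "case_prod (glue_aut V E)"])
    show "\<forall>\<phi>\<in>carrier (aut_group (modtree V E)). case_prod (glue_aut V E) (split_aut V E \<phi>) = \<phi>"
      using glue_split_aut[OF assms] by blast
    show "\<forall>ap\<in>carrier (semidirect_aut V E). split_aut V E (case_prod (glue_aut V E) ap) = ap"
      using split_glue_aut[OF assms] by auto
    show "split_aut V E ` carrier (aut_group (modtree V E)) \<subseteq> carrier (semidirect_aut V E)"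
      using split_aut_in_carrier[OF assms] by blast
    show "case_prod (glue_aut V E) ` carrier (semidirect_aut V E) \<subseteq> carrier (aut_group (modtree V E))"
      using glue_aut_in_carrier[OF assms] by auto
  qed
qed

end
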